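(* Let $n\ge p$. For every $\mathcal X\in\mathrm{St}(n,p,l)$ and $\mathcal V\in T_{\mathcal X}\mathrm{St}(n,p,l)$ the tensor $\mathcal X+\mathcal V$ lies in $L^{-1}(\mathbb C^{n\times p\times l}_* )$, so $qf(\mathcal X+\mathcal V)$ is well defined, and the map $$R_{\mathcal X}(\mathcal V)=qf(\mathcal X+\mathcal V)$$ is a retraction on $\mathrm{St}(n,p,l)$.
   Context: Frontal slices $A^{(i)}=\mathcal A(:,:,i)$. The t-product is $\mathcal A*\mathcal B=\operatorname{fold}(\operatorname{bcirc}(\mathcal A)\operatorname{unfold}(\mathcal B))$, where $\operatorname{bcirc}(\mathcal A)$ is the block circulant matrix with $(i,j)$ block $A^{(((i-j)\bmod l)+1)}$, $\operatorname{unfold}$ stacks frontal slices vertically, $\operatorname{fold}$ is its inverse. Transpose: $\mathcal A^\top$ has frontal slices $(A^{(1)})^\top,(A^{(l)})^\top,\dots,(A^{(2)})^\top$. $\mathcal I$ is the identity tensor (first frontal slice identity, others zero). $\mathrm{St}(n,p,l)=\{\mathcal X\in\mathbb R^{n\times p\times l}:\mathcal X^\top*\mathcal X=\mathcal I\}$, an embedded submanifold of $\mathbb R^{n\times p\times l}$ with tangent spaces $T_{\mathcal X}\mathrm{St}(n,p,l)$. The DFT $L(\mathcal A)=\hat{\mathcal A}$ has frontal slices $\hat A^{(k)}=\sum_{j=1}^l\omega^{(k-1)(j-1)}A^{(j)}$, $\omega=e^{-2\pi\mathrm i/l}$; $L^{-1}$ is its inverse; $\mathcal C=\mathcal A*\mathcal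 B$ iff $\hat C^{(k)}=\hat A^{(k)}\hat B^{(k)}$ for all $k$. $\mathbb C^{n\times p\times l}_*$ is the set of complex tensors all of whose frontal slices have full column rank $p$; $\mathbb C^{p\times p\times l}_{upp+}$ is the set of complex tensors whose frontal slices are upper triangular with real, strictly positive diagonal. Every $\mathcal A\in L^{-1}(\mathbb C^{n\times p\times l}_* )$ has a unique t-QR decomposition $\mathcal A=\mathcal Q*\mathcal R$ with $\mathcal Q\in\mathrm{St}(n,p,l)$ and $\mathcal R\in L^{-1}(\mathbb C^{p\times p\times l}_{upp+})$; $qf(\mathcal A):=\mathcal Q$. A retraction on a manifold $M$ is a smooth map $R:TM\to M$ such that, with $R_x$ its restriction to $T_xM$, $R_x(0_x)=x$ and $\mathrm DR_x(0_x)$ is the identity of $T_xM$. *)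

theory Defs
  imports "HOL-Analysis.Analysis"
begin

text \<open>Frontal slices are indexed by a finite type 'l of class enum; the slice
 numbered k (0-based, i.e. the paper's A^(k+1)) is the k-th element of the
 canonical enumeration of 'l.  Rows/columns of slices are indexed by finite
 types 'n, 'p; the order on 'p used for upper triangularity is again given
 by the enumeration.\<close>

definition ix :: "'l::enum \<Rightarrow> nat" where
  "ix x = (LEAST k. (enum_class.enum :: 'l list) ! k = x)"

definition sl :: "nat \<Rightarrow> 'l::enum" where
  "sl k = (enum_class.enum :: 'l list) ! (k mod CARD('l))"

text \<open>A tensor A in R^{n x p x l} is A :: real^'l^'p^'n with A(i,j,k) = A$i$j$k.\<close>

definition fslice :: "'a^'l^'p^'n \<Rightarrow> 'l \<Rightarrow> 'a^'p^'n" where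
  "fslice A k = (\<chi> i j. A$i$j$k)"

definition bcirc :: "real^('l::enum)^'p^'n \<Rightarrow> real^('p \<times> 'l)^('n \<times> 'l)" where
  "bcirc A = (\<chi> x y. A$(fst x)$(fst y)$(sl ((ix (snd x) + CARD('l) - ix (snd y)) mod CARD('l))))"

definition unfold_t :: "real^'l^'q^'p \<Rightarrow> real^'q^('p \<times> 'l)" where
  "unfold_t B = (\<chi> x j. B$(fst x)$j$(snd x))"

definition fold_t :: "real^'q^('n \<times> 'l) \<Rightarrow> real^'l^'q^'n" where
  "fold_t M = (\<chi> i j k. M$(i,k)$j)"

definition tprod :: "real^('l::enum)^'p^'n \<Rightarrow> real^('l::enum)^'q^'p \<Rightarrow> real^('l::enum)^'q^'n"
    (infixl "\<star>" 70) where
  "A \<star> B = fold_t (bcirc A ** unfold_t B)"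

definition ttrans :: "real^('l::enum)^'p^'n \<Rightarrow> real^('l::enum)^'n^'p" where
  "ttrans A = (\<chi> i j k. A$j$i$(sl ((CARD('l) - ix k) mod CARD('l))))"

definition tid :: "real^('l::enum)^'p^'p" where
  "tid = (\<chi> i j k. if i = j \<and> ix k = 0 then 1 else 0)"

definition stiefel :: "(real^('l::enum)^'p^'n) set" where
  "stiefel = {X. ttrans X \<star> X = tid}"

definition omega :: "'l::enum itself \<Rightarrow> complex" where
  "omega _ = cis (- 2 * pi / real CARD('l))"

definition dft :: "real^('l::enum)^'p^'n \<Rightarrow> complex^('l::enum)^'p^'n" where
  "dft A = (\<chi> i j k. \<Sum>k'\<in>UNIV. omega TYPE('l) ^ (ix k * ix k') * complex_of_real (A$i$j$k'))"

definition Cstar :: "(complex^'l^'p^'n) set" where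
  "Cstar = {A. \<forall>k. rank (fslice A k) = CARD('p)}"

definition Cupp_pos :: "(complex^('l::enum)^('p::enum)^('p::enum)) set" where
  "Cupp_pos = {A. \<forall>k. (\<forall>i j. ix j < ix i \<longrightarrow> A$i$j$k = 0) \<and>
                     (\<forall>i. Im (A$i$i$k) = 0 \<and> Re (A$i$i$k) > 0)}"

definition qf :: "real^('l::enum)^('p::enum)^'n \<Rightarrow> real^('l::enum)^('p::enum)^'n" where
  "qf A = (THE Q. Q \<in> stiefel \<and> (\<exists>R. dft R \<in> Cupp_pos \<and> A = Q \<star> R))"

definition dirderiv :: "('a::real_normed_vector \<Rightarrow> 'b::real_normed_vector) \<Rightarrow> 'a \<Rightarrow> 'a \<Rightarrow> 'b" where
  "dirderiv f v x = vector_derivative (\<lambda>t. f (x + t *\<^sub>R v)) (at 0)"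

fun iter_dd :: "'a::real_normed_vector list \<Rightarrow> ('a \<Rightarrow> 'b::real_normed_vector) \<Rightarrow> 'a \<Rightarrow> 'b" where
  "iter_dd [] f = f"
| "iter_dd (v # vs) f = dirderiv (iter_dd vs f) v"

definition smooth_on :: "'a::euclidean_space set \<Rightarrow> ('a \<Rightarrow> 'b::real_normed_vector) \<Rightarrow> bool" where
  "smooth_on U f \<longleftrightarrow> open U \<and>
     (\<forall>vs. continuous_on U (iter_dd vs f) \<and>
        (\<forall>v. \<forall>x\<in>U. (\<lambda>t. iter_dd vs f (x + t *\<^sub>R v)) differentiable (at 0)))"

definition smooth_on_set :: "'a::euclidean_space set \<Rightarrow> ('a \<Rightarrow> 'b::real_normed_vector) \<Rightarrow> bool" where
  "smooth_on_set S f \<longleftrightarrow> (\<forall>z\<in>S. \<exists>U F. open U \<and> z \<in> U \<and> smooth_on U F \<and> (\<forall>w\<in>U \<inter> S. F w = f w))"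

definition tangent_space :: "'a::euclidean_space set \<Rightarrow> 'a \<Rightarrow> 'a set" where
  "tangent_space M x = {v. \<exists>\<gamma> e. e > 0 \<and> smooth_on {-e<..<e} \<gamma> \<and>
       (\<forall>t\<in>{-e<..<e}. \<gamma> t \<in> M) \<and> \<gamma> 0 = x \<and> (\<gamma> has_vector_derivative v) (at 0)}"

definition tangent_bundle :: "'a::euclidean_space set \<Rightarrow> ('a \<times> 'a) set" where
  "tangent_bundle M = {(x, v). x \<in> M \<and> v \<in> tangent_space M x}"

text \<open>Retraction: smooth R : TM -> M with R_x(0_x) = x and DR_x(0_x) = id on T_xM
 (the differential of R_x at 0 in direction v is d/dt R_x(t v) at t = 0).\<close>
definition is_retraction :: "'a::euclidean_space set \<Rightarrow> ('a \<times> 'a \<Rightarrow> 'a) \<Rightarrow> bool" where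
  "is_retraction M R \<longleftrightarrow>
     (\<forall>z\<in>tangent_bundle M. R z \<in> M) \<and>
     smooth_on_set (tangent_bundle M) R \<and>
     (\<forall>x\<in>M. R (x, 0) = x) \<and>
     (\<forall>x\<in>M. \<forall>v\<in>tangent_space M x. ((\<lambda>t. R (x, t *\<^sub>R v)) has_vector_derivative v) (at 0))"

end

theory Submission
  imports Defs
begin

text \<open>Under the DFT along the tube mode the t-product becomes slicewise matrix multiplication
  and the t-transpose slicewise conjugate transposition. So \<open>St(n,p,l)\<close> consists of the tensors
  whose DFT slices have orthonormal columns, the t-QR decomposition is the slicewise QR
  decomposition, and \<open>qf\<close> is the inverse DFT of slicewise Gram-Schmidt; the Gram-Schmidt
  factors of the slices are the DFT of a real tensor because Gram-Schmidt commutes with complex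
  conjugation.

  For a tangent vector \<open>V\<close> at \<open>X\<close> every slice of \<open>X\<^sup>H V\<close> is skew-Hermitian, which forces the
  slices of \<open>X + V\<close> to be injective. Hence \<open>X + V\<close> lies in the open set on which Gram-Schmidt is
  given by field operations, conjugation and square roots of positive reals, and is therefore
  smooth. Finally, differentiating \<open>Q(t) R(t) = X + t V\<close> at \<open>t = 0\<close> shows that \<open>R'(0)\<close> is upper
  triangular with real diagonal and skew-Hermitian, hence zero, so that \<open>Q'(0) = V\<close>.\<close>

section \<open>The tube index and roots of unity\<close>

lemma ix_less_card [simp]: "ix (k::'l::enum) < CARD('l)"
  and enum_nth_ix: "(enum_class.enum :: 'l list) ! ix k = k"
proof -
  have "k \<in> set (enum_class.enum :: 'l list)" by (simp add: enum_UNIV)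
  then obtain m where m: "m < length (enum_class.enum :: 'l list)" "(enum_class.enum :: 'l list) ! m = k"
    by (metis in_set_conv_nth)
  show "(enum_class.enum :: 'l list) ! ix k = k" unfolding ix_def
    by (rule LeastI[of _ m]) (use m in auto)
  have "ix k \<le> m" unfolding ix_def by (rule Least_le) (use m in auto)
  then show "ix k < CARD('l)" using m by (simp add: card_UNIV_length_enum)
qed

lemma sl_ix [simp]: "sl (ix k) = (k::'l::enum)"
  by (simp add: sl_def enum_nth_ix)

lemma ix_sl [simp]: "ix (sl m :: 'l::enum) = m mod CARD('l)"
proof -
  let ?e = "enum_class.enum :: 'l list" and ?m = "m mod CARD('l)"
  have "?e ! ix (?e ! ?m) = ?e ! ?m" by (rule enum_nth_ix)
  moreover have "ix (?e ! ?m) < length ?e" "?m < length ?e"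
    by (simp_all add: card_UNIV_length_enum[symmetric])
  ultimately show ?thesis
    using enum_distinct nth_eq_iff_index_eq by (metis sl_def)
qed

lemma ix_eq_iff: "ix (a::'l::enum) = ix b \<longleftrightarrow> a = b"
  by (metis sl_ix)

lemma sum_UNIV_sl: "(\<Sum>k\<in>UNIV. f k) = (\<Sum>m<CARD('l::enum). f (sl m :: 'l))"
  by (rule sum.reindex_bij_witness[where i=sl and j=ix]) auto

lemma omega_power: "omega TYPE('l::enum) ^ n = cis (- 2 * pi * real n / real CARD('l))"
  by (simp add: omega_def Complex.DeMoivre mult.commute)

lemma norm_omega_power [simp]: "norm (omega TYPE('l::enum) ^ n) = 1"
  by (simp add: omega_power)

lemma omega_power_eq_1_iff: "omega TYPE('l::enum) ^ d = 1 \<longleftrightarrow> CARD('l) dvd d"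
proof -
  have "exp (2 * of_real pi * \<i> * of_nat d / of_nat CARD('l)) = cis (2 * pi * real d / real CARD('l))"
    by (simp add: cis_conv_exp mult.commute mult.left_commute)
  then have "omega TYPE('l) ^ d = cnj (exp (2 * of_real pi * \<i> * of_nat d / of_nat CARD('l)))"
    by (simp add: omega_power cis_cnj)
  then have "omega TYPE('l) ^ d = 1 \<longleftrightarrow> exp (2 * of_real pi * \<i> * of_nat d / of_nat CARD('l)) = 1"
    by (metis complex_cnj_cnj complex_cnj_one)
  also have "\<dots> \<longleftrightarrow> CARD('l) dvd d"
    by (rule complex_root_unity_eq_1) (simp add: Suc_leI)
  finally show ?thesis .
qed

lemma omega_power_mod: "omega TYPE('l::enum) ^ (a mod CARD('l)) = omega TYPE('l) ^ a"
proof -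
  have "omega TYPE('l) ^ a = omega TYPE('l) ^ (a mod CARD('l)) * (omega TYPE('l) ^ CARD('l)) ^ (a div CARD('l))"
    by (metis mod_mult_div_eq power_add power_mult)
  moreover have "omega TYPE('l) ^ CARD('l) = 1" by (simp add: omega_power_eq_1_iff)
  ultimately show ?thesis by simp
qed

lemma omega_power_add_mod:
  "omega TYPE('l::enum) ^ (a * ((b + c) mod CARD('l))) = omega TYPE('l) ^ (a * b) * omega TYPE('l) ^ (a * c)"
  by (metis omega_power_mod mod_mult_right_eq power_add add_mult_distrib2)

lemma omega_power_cnj:
  assumes "CARD('l::enum) dvd (x + y)"
  shows "omega TYPE('l) ^ x = cnj (omega TYPE('l) ^ y)"
proof -
  let ?a = "omega TYPE('l) ^ x" and ?b = "omega TYPE('l) ^ y"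
  have "?a * ?b = 1" using assms by (simp add: omega_power_eq_1_iff power_add[symmetric])
  moreover have "cnj ?b * ?b = 1"
    by (metis complex_norm_square mult.commute norm_omega_power of_real_1 power_one)
  moreover have "?b \<noteq> 0" by (metis norm_omega_power norm_zero zero_neq_one)
  ultimately show ?thesis by (metis mult_right_cancel)
qed

lemma cnj_omega_power: "cnj (omega TYPE('l::enum) ^ n) = omega TYPE('l) ^ (n * (CARD('l) - 1))"
proof (rule omega_power_cnj[symmetric])
  have "n * (CARD('l) - 1) + n = n * CARD('l)"
    by (simp add: algebra_simps)
  then show "CARD('l) dvd (n * (CARD('l) - 1) + n)" by simp
qed

lemma dvd_add_mult_pred_iff:
  fixes a b L :: nat
  assumes "a < L" "b < L"
  shows "L dvd (a + b * (L - 1)) \<longleftrightarrow> a = b"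
proof -
  have "int (a + b * (L - 1)) = int a + int b * (int L - 1)"
    using assms by (simp add: of_nat_diff)
  also have "\<dots> = int a - int b + int b * int L"
    by (simp add: algebra_simps)
  finally have "L dvd (a + b * (L - 1)) \<longleftrightarrow> int L dvd (int a - int b)"
    by (metis int_dvd_int_iff dvd_add_times_triv_right_iff mult.commute)
  also have "\<dots> \<longleftrightarrow> a = b"
  proof
    assume "int L dvd (int a - int b)"
    moreover have "\<bar>int a - int b\<bar> < int L" using assms by auto
    ultimately show "a = b" using dvd_imp_le_int[of "int a - int b" "int L"] by force
  qed simp
  finally show ?thesis .
qed

lemma omega_orthogonality:
  assumes "a < CARD('l::enum)" "b < CARD('l)"
  shows "(\<Sum>k\<in>(UNIV::'l set). omega TYPE('l) ^ (ix k * a) * cnj (omega TYPE('l) ^ (ix k * b)))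
       = (if a = b then of_nat CARD('l) else 0)"
proof -
  let ?L = "CARD('l)" and ?w = "omega TYPE('l)"
  let ?d = "a + b * (?L - 1)"
  note dvd_iff = dvd_add_mult_pred_iff[OF assms]
  have "?w ^ (ix k * a) * cnj (?w ^ (ix k * b)) = (?w ^ ?d) ^ ix k" for k :: 'l
  proof -
    have "?w ^ (ix k * a) * cnj (?w ^ (ix k * b)) = ?w ^ (ix k * a + ix k * b * (?L - 1))"
      by (simp only: cnj_omega_power power_add)
    also have "ix k * a + ix k * b * (?L - 1) = ?d * ix k"
      by (simp add: algebra_simps)
    finally show ?thesis by (simp only: power_mult)
  qed
  then have "(\<Sum>k\<in>(UNIV::'l set). ?w ^ (ix k * a) * cnj (?w ^ (ix k * b))) = (\<Sum>m<?L. (?w ^ ?d) ^ m)"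
    by (simp add: sum_UNIV_sl)
  also have "\<dots> = (if a = b then of_nat ?L else 0)"
  proof (cases "a = b")
    case True
    then have "?w ^ ?d = 1" using dvd_iff omega_power_eq_1_iff by blast
    then show ?thesis using True by simp
  next
    case False
    then have "?w ^ ?d \<noteq> 1" using dvd_iff omega_power_eq_1_iff by blast
    moreover have "(?w ^ ?d) ^ ?L = 1"
      by (metis power_mult mult.commute omega_power_eq_1_iff dvd_triv_left)
    ultimately show ?thesis using False by (simp add: geometric_sum)
  qed
  finally show ?thesis .
qed

section \<open>The DFT along the tube mode\<close>

definition tdiff :: "'l::enum \<Rightarrow> 'l \<Rightarrow> 'l" where
  "tdiff k c = sl ((ix k + CARD('l) - ix c) mod CARD('l))"

lemma ix_tdiff: "ix (tdiff k c) = (ix k + CARD('l) - ix c) mod CARD('l)" for k c :: "'l::enum"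
  by (simp add: tdiff_def)

lemma tprod_nth:
  fixes A :: "real^('l::enum)^'p^'n" and B :: "real^('l::enum)^'q^'p"
  shows "(A \<star> B)$i$j$k = (\<Sum>m\<in>UNIV. \<Sum>k'\<in>UNIV. A$i$m$(tdiff k k') * B$m$j$k')"
  unfolding tprod_def fold_t_def bcirc_def unfold_t_def matrix_matrix_mult_def tdiff_def
  by (simp add: UNIV_Times_UNIV[symmetric] sum.cartesian_product case_prod_beta del: UNIV_Times_UNIV)

lemma dft_nth:
  fixes A :: "real^('l::enum)^'p^'n"
  shows "dft A $i$j$k = (\<Sum>k'\<in>UNIV. omega TYPE('l) ^ (ix k * ix k') * complex_of_real (A$i$j$k'))"
  unfolding dft_def by simp

lemma mod_add_diff_mod:
  assumes "x < (L::nat)" "c < L"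
  shows "((x + c) mod L + L - c) mod L = x" and "((x + L - c) mod L + c) mod L = x"
proof -
  show "((x + c) mod L + L - c) mod L = x"
  proof (cases "x + c < L")
    case False
    then have "(x + c) mod L = x + c - L" using assms by (simp add: mod_if)
    then show ?thesis using assms False by simp
  qed (use assms in simp)
  show "((x + L - c) mod L + c) mod L = x"
  proof (cases "c \<le> x")
    case True
    then have "(x + L - c) mod L = x - c" using assms
      by (metis add.commute add_diff_assoc mod_add_self2 mod_less diff_less_Suc less_imp_diff_less)
    then show ?thesis using assms True by simp
  next
    case False
    then have "(x + L - c) mod L = x + L - c" using assms by simp
    then show ?thesis using assms False by (simp add: mod_if)
  qed
qed

lemma sum_omega_shift:
  fixes f :: "'l::enum \<Rightarrow> complex"
  shows "(\<Sum>k\<in>UNIV. omega TYPE('l) ^ (n * ix k) * f (tdiff k c))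
        = omega TYPE('l) ^ (n * ix c) * (\<Sum>a\<in>UNIV. omega TYPE('l) ^ (n * ix a) * f a)"
proof -
  define h :: "'l \<Rightarrow> 'l" where "h a = sl ((ix a + ix c) mod CARD('l))" for a
  have ix_h: "ix (h a) = (ix a + ix c) mod CARD('l)" for a by (simp add: h_def)
  have tdiff_h: "tdiff (h a) c = a" for a
    using mod_add_diff_mod(1)[OF ix_less_card ix_less_card, of a c] by (metis ix_h ix_tdiff ix_eq_iff)
  have h_tdiff: "h (tdiff k c) = k" for k
    using mod_add_diff_mod(2)[OF ix_less_card ix_less_card, of k c] by (metis ix_h ix_tdiff ix_eq_iff)
  have "(\<Sum>k\<in>UNIV. omega TYPE('l) ^ (n * ix k) * f (tdiff k c))
      = (\<Sum>a\<in>UNIV. omega TYPE('l) ^ (n * ix c) * (omega TYPE('l) ^ (n * ix a) * f a))"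
  proof (rule sum.reindex_bij_witness[where i=h and j="\<lambda>k. tdiff k c"])
    fix k :: 'l
    have "ix k = (ix (tdiff k c) + ix c) mod CARD('l)" by (metis ix_h h_tdiff)
    then have "omega TYPE('l) ^ (n * ix k) = omega TYPE('l) ^ (n * ix (tdiff k c)) * omega TYPE('l) ^ (n * ix c)"
      by (simp only: omega_power_add_mod)
    then show "omega TYPE('l) ^ (n * ix c) * (omega TYPE('l) ^ (n * ix (tdiff k c)) * f (tdiff k c)) =
        omega TYPE('l) ^ (n * ix k) * f (tdiff k c)" by (simp only: mult_ac)
  qed (auto simp: tdiff_h h_tdiff)
  then show ?thesis by (simp add: sum_distrib_left)
qed

lemma dft_tprod:
  fixes A :: "real^('l::enum)^'p^'n" and B :: "real^('l::enum)^'q^'p"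
  shows "dft (A \<star> B) $i$j$k = (\<Sum>m\<in>UNIV. dft A $i$m$k * dft B $m$j$k)"
proof -
  let ?w = "omega TYPE('l)"
  have "dft (A \<star> B) $i$j$k = (\<Sum>k2\<in>UNIV. \<Sum>m\<in>UNIV. \<Sum>k'\<in>UNIV.
      of_real (B$m$j$k') * (?w ^ (ix k * ix k2) * of_real (A$i$m$(tdiff k2 k'))))"
    by (simp add: dft_nth tprod_nth sum_distrib_left mult_ac)
  also have "\<dots> = (\<Sum>m\<in>UNIV. \<Sum>k'\<in>UNIV. \<Sum>k2\<in>UNIV.
      of_real (B$m$j$k') * (?w ^ (ix k * ix k2) * of_real (A$i$m$(tdiff k2 k'))))"
    by (subst sum.swap) (rule sum.cong, simp, rule sum.swap)
  also have "\<dots> = (\<Sum>m\<in>UNIV. \<Sum>k'\<in>UNIV. of_real (B$m$j$k') *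
      (\<Sum>k2\<in>UNIV. ?w ^ (ix k * ix k2) * of_real (A$i$m$(tdiff k2 k'))))"
    by (simp only: sum_distrib_left)
  also have "\<dots> = (\<Sum>m\<in>UNIV. \<Sum>k'\<in>UNIV. of_real (B$m$j$k') * (?w ^ (ix k * ix k') * dft A $i$m$k))"
    by (simp only: sum_omega_shift[where f="\<lambda>a. of_real (A$i$_$a)"] dft_nth)
  also have "\<dots> = (\<Sum>m\<in>UNIV. dft A $i$m$k * dft B $m$j$k)"
    by (simp add: dft_nth sum_distrib_left sum_distrib_right mult_ac)
  finally show ?thesis .
qed

definition tneg :: "'l::enum \<Rightarrow> 'l" where
  "tneg k = sl ((CARD('l) - ix k) mod CARD('l))"

lemma ix_tneg: "ix (tneg k) = (CARD('l) - ix k) mod CARD('l)" for k :: "'l::enum"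
  unfolding tneg_def by simp

lemma tneg_tneg [simp]: "tneg (tneg k) = k" for k :: "'l::enum"
proof -
  have "ix (tneg (tneg k)) = ix k"
  proof (cases "ix k = 0")
    case False
    then have "(CARD('l) - ix k) mod CARD('l) = CARD('l) - ix k" by simp
    then show ?thesis using False less_imp_le[OF ix_less_card[of k]] by (simp add: ix_tneg)
  qed (simp add: ix_tneg)
  then show ?thesis by (simp add: ix_eq_iff)
qed

lemma omega_power_tneg: "omega TYPE('l) ^ (a * ix (tneg k)) = cnj (omega TYPE('l) ^ (a * ix k))"
  for k :: "'l::enum"
proof (rule omega_power_cnj)
  show "CARD('l) dvd (a * ix (tneg k) + a * ix k)"
  proof (cases "ix k = 0")
    case False
    then have "ix (tneg k) = CARD('l) - ix k" by (simp add: ix_tneg)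
    then have "a * ix (tneg k) + a * ix k = a * CARD('l)" using less_imp_le[OF ix_less_card[of k]]
      by (simp add: add_mult_distrib2[symmetric])
    then show ?thesis by simp
  qed (simp add: ix_tneg)
qed

lemma sum_tneg: "(\<Sum>k\<in>UNIV. f (tneg k)) = (\<Sum>k\<in>UNIV. f k)" for f :: "'l::enum \<Rightarrow> 'a::comm_monoid_add"
  by (rule sum.reindex_bij_witness[where i=tneg and j=tneg]) auto

lemma ttrans_nth: "ttrans A $i$j$k = A$j$i$(tneg k)"
  unfolding ttrans_def tneg_def by simp

lemma dft_ttrans: "dft (ttrans A) $i$j$k = cnj (dft A $j$i$k)" for A :: "real^('l::enum)^'p^'n"
proof -
  have "dft (ttrans A) $i$j$k = (\<Sum>k'\<in>UNIV. omega TYPE('l) ^ (ix k * ix k') * of_real (A$j$i$(tneg k')))"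
    by (simp add: dft_nth ttrans_nth)
  also have "\<dots> = (\<Sum>k'\<in>UNIV. omega TYPE('l) ^ (ix k * ix (tneg k')) * of_real (A$j$i$k'))"
    by (subst sum_tneg[symmetric]) simp
  also have "\<dots> = cnj (dft A $j$i$k)"
    by (simp add: dft_nth omega_power_tneg)
  finally show ?thesis .
qed

lemma dft_tneg: "dft A $i$j$(tneg k) = cnj (dft A $i$j$k)" for A :: "real^('l::enum)^'p^'n"
  by (simp add: dft_nth omega_power_tneg mult.commute)

lemma dft_tid: "dft (tid :: real^('l::enum)^'p^'p) $i$j$k = (if i = j then 1 else 0)"
proof -
  have "dft (tid :: real^('l::enum)^'p^'p) $i$j$k
      = (\<Sum>m<CARD('l). omega TYPE('l) ^ (ix k * m) * complex_of_real (if i = j \<and> m = 0 then 1 else 0))"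
    by (simp add: dft_nth tid_def sum_UNIV_sl)
  also have "\<dots> = (\<Sum>m<CARD('l). if m = 0 then (if i = j then 1 else 0) else 0)"
    by (rule sum.cong) auto
  also have "\<dots> = (if i = j then 1 else 0)" by simp
  finally show ?thesis .
qed

lemma dft_add: "dft (A + B) = dft A + dft B"
  by (simp add: dft_def vec_eq_iff sum.distrib algebra_simps)

lemma dft_scaleR: "dft (c *\<^sub>R A) = c *\<^sub>R dft A"
  unfolding dft_def by (simp add: vec_eq_iff) (simp add: scaleR_conv_of_real sum_distrib_left mult_ac)

definition idft :: "complex^('l::enum)^'p^'n \<Rightarrow> real^('l::enum)^'p^'n" where
  "idft C = (\<chi> i j k. Re (\<Sum>\<kappa>\<in>UNIV. cnj (omega TYPE('l) ^ (ix \<kappa> * ix k)) * C$i$j$\<kappa>) / real CARD('l))"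

lemma idft_dft: "idft (dft A) = A" for A :: "real^('l::enum)^'p^'n"
proof -
  have "(\<Sum>\<kappa>\<in>UNIV. cnj (omega TYPE('l) ^ (ix \<kappa> * ix k)) * dft A$i$j$\<kappa>) = of_nat CARD('l) * of_real (A$i$j$k)"
    for i j and k :: 'l
  proof -
    have "(\<Sum>\<kappa>\<in>UNIV. cnj (omega TYPE('l) ^ (ix \<kappa> * ix k)) * dft A$i$j$\<kappa>)
        = (\<Sum>k'\<in>UNIV. of_real (A$i$j$k') *
             (\<Sum>\<kappa>::'l\<in>UNIV. omega TYPE('l) ^ (ix \<kappa> * ix k') * cnj (omega TYPE('l) ^ (ix \<kappa> * ix k))))"
      by (simp only: dft_nth sum_distrib_left, subst sum.swap, rule sum.cong[OF refl], rule sum.cong[OF refl],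
          simp only: mult_ac)
    also have "\<dots> = (\<Sum>k'\<in>UNIV. of_real (A$i$j$k') * (if ix k' = ix k then of_nat CARD('l) else 0))"
      by (simp only: omega_orthogonality ix_less_card)
    also have "\<dots> = of_nat CARD('l) * of_real (A$i$j$k)"
      by (simp add: ix_eq_iff if_distrib cong: if_cong)
    finally show ?thesis .
  qed
  then show ?thesis by (simp add: idft_def vec_eq_iff)
qed

lemma dft_inject: "dft A = dft B \<longleftrightarrow> A = B" for A B :: "real^('l::enum)^'p^'n"
  by (metis idft_dft)

definition conj_symmetric :: "complex^('l::enum)^'p^'n \<Rightarrow> bool" where
  "conj_symmetric C \<longleftrightarrow> (\<forall>i j k. C$i$j$(tneg k) = cnj (C$i$j$k))"

lemma dft_idft:
  fixes C :: "complex^('l::enum)^'p^'n"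
  assumes "conj_symmetric C"
  shows "dft (idft C) = C"
proof -
  let ?s = "\<lambda>i j (k::'l). (\<Sum>\<kappa>\<in>UNIV. cnj (omega TYPE('l) ^ (ix \<kappa> * ix k)) * C$i$j$\<kappa>)"
  have real: "of_real (Re (?s i j k)) = ?s i j k" for i j k
  proof -
    have "cnj (?s i j k) = (\<Sum>\<kappa>\<in>UNIV. omega TYPE('l) ^ (ix \<kappa> * ix k) * C$i$j$(tneg \<kappa>))"
      using assms by (simp add: conj_symmetric_def)
    also have "\<dots> = (\<Sum>\<kappa>\<in>UNIV. omega TYPE('l) ^ (ix (tneg \<kappa>) * ix k) * C$i$j$\<kappa>)"
      by (subst sum_tneg[symmetric]) simp
    also have "\<dots> = ?s i j k" by (simp add: omega_power_tneg mult.commute)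
    finally have "?s i j k \<in> \<real>" by (simp only: Reals_cnj_iff)
    then show ?thesis by (rule of_real_Re)
  qed
  have "dft (idft C) $i$j$k0 = C$i$j$k0" for i j k0
  proof -
    have "dft (idft C) $i$j$k0 = (\<Sum>k\<in>UNIV. omega TYPE('l) ^ (ix k0 * ix k) * (?s i j k / of_nat CARD('l)))"
      unfolding dft_nth idft_def using real by simp
    also have "\<dots> = (\<Sum>\<kappa>\<in>UNIV. C$i$j$\<kappa> *
        (\<Sum>k::'l\<in>UNIV. omega TYPE('l) ^ (ix k * ix k0) * cnj (omega TYPE('l) ^ (ix k * ix \<kappa>)))) / of_nat CARD('l)"
      by (simp only: sum_distrib_left sum_divide_distrib, subst sum.swap, rule sum.cong[OF refl],
          rule sum.cong[OF refl], simp only: mult_ac times_divide_eq_right)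
    also have "\<dots> = (\<Sum>\<kappa>\<in>UNIV. C$i$j$\<kappa> * (if ix k0 = ix \<kappa> then of_nat CARD('l) else 0)) / of_nat CARD('l)"
      by (simp only: omega_orthogonality ix_less_card)
    also have "\<dots> = C$i$j$k0"
      by (simp add: ix_eq_iff if_distrib cong: if_cong)
    finally show ?thesis .
  qed
  then show ?thesis by (simp add: vec_eq_iff)
qed

section \<open>Gram-Schmidt and the QR decomposition of complex matrices\<close>

definition cinner :: "complex^'n \<Rightarrow> complex^'n \<Rightarrow> complex" where
  "cinner u v = (\<Sum>i\<in>UNIV. cnj (u$i) * v$i)"

lemma cinner_add_right: "cinner u (v + w) = cinner u v + cinner u w"
  by (simp add: cinner_def sum.distrib algebra_simps)
lemma cinner_diff_right: "cinner u (v - w) = cinner u v - cinner u w"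
  by (simp add: cinner_def sum_subtractf algebra_simps)
lemma cinner_scale_right: "cinner u (c *s v) = c * cinner u v"
  by (simp add: cinner_def sum_distrib_left algebra_simps)
lemma cinner_scale_left: "cinner (c *s u) v = cnj c * cinner u v"
  by (simp add: cinner_def sum_distrib_left algebra_simps)
lemma cinner_sum_right: "cinner u (sum f S) = (\<Sum>s\<in>S. cinner u (f s))"
  by (simp add: cinner_def sum_component sum_distrib_left) (rule sum.swap)
lemma cnj_cinner: "cnj (cinner u v) = cinner v u"
  by (simp add: cinner_def mult.commute)

lemma cinner_self: "cinner u u = of_real (\<Sum>i\<in>UNIV. (cmod (u$i))^2)"
  unfolding cinner_def of_real_sum by (rule sum.cong) (simp_all add: complex_norm_square mult.commute del: of_real_power)

lemma cinner_self_Re_pos_iff: "0 < Re (cinner u u) \<longleftrightarrow> u \<noteq> 0"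
proof -
  have "Re (cinner u u) = (\<Sum>i\<in>UNIV. (cmod (u$i))^2)" by (simp add: cinner_self)
  moreover have "(\<Sum>i\<in>UNIV. (cmod (u$i))^2) = 0 \<longleftrightarrow> (\<forall>i. u$i = 0)"
    by (subst sum_nonneg_eq_0_iff) auto
  moreover have "0 \<le> (\<Sum>i\<in>UNIV. (cmod (u$i))^2)" by (simp add: sum_nonneg)
  ultimately show ?thesis by (auto simp: vec_eq_iff)
qed

lemma cinner_self_eq_0_iff: "cinner u u = 0 \<longleftrightarrow> u = 0"
proof
  assume "cinner u u = 0"
  then have "\<not> 0 < Re (cinner u u)" by simp
  then show "u = 0" using cinner_self_Re_pos_iff by blast
qed (simp add: cinner_def)

definition adj_mult :: "complex^'p^'n \<Rightarrow> complex^'q^'n \<Rightarrow> complex^'q^'p" where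
  "adj_mult A B = (\<chi> a b. \<Sum>i\<in>UNIV. cnj (A$i$a) * B$i$b)"

definition mat_cnj :: "complex^'p^'n \<Rightarrow> complex^'p^'n" where
  "mat_cnj M = (\<chi> i j. cnj (M$i$j))"

lemma mat_cnj_mult: "mat_cnj (A ** B) = mat_cnj A ** mat_cnj B"
  by (simp add: mat_cnj_def matrix_matrix_mult_def vec_eq_iff)

lemma mat_cnj_adj_mult: "adj_mult (mat_cnj A) (mat_cnj B) = mat_cnj (adj_mult A B)"
  by (simp add: mat_cnj_def adj_mult_def vec_eq_iff)

lemma mat_cnj_mat_1: "mat_cnj (mat 1) = mat 1"
  by (simp add: mat_cnj_def mat_def vec_eq_iff)

definition upper_pos :: "complex^('p::enum)^('p::enum) \<Rightarrow> bool" where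
  "upper_pos R \<longleftrightarrow> (\<forall>i j. ix j < ix i \<longrightarrow> R$i$j = 0) \<and> (\<forall>i. Im (R$i$i) = 0 \<and> Re (R$i$i) > 0)"

lemma upper_pos_mat_1: "upper_pos (mat 1)"
  by (auto simp: upper_pos_def mat_def)

lemma upper_pos_mat_cnj: "upper_pos R \<Longrightarrow> upper_pos (mat_cnj R)"
  by (simp add: upper_pos_def mat_cnj_def)

lemma matrix_vector_mult_scale: "M *v (c *s v) = c *s (M *v v)"
  and matrix_vector_mult_sum: "M *v (\<Sum>j\<in>S. f j) = (\<Sum>j\<in>S. M *v f j)"
  for M :: "'a::field^'p^'n"
  using matrix_vector_mul_linear_gen[of M] by (simp_all add: linear_iff_module_hom module_hom.scale module_hom.sum)

definition ncol :: "complex^('p::enum)^'n \<Rightarrow> nat \<Rightarrow> complex^'n" where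
  "ncol M m = (\<chi> i. M$i$(sl m))"

text \<open>Gram-Schmidt on the columns, taken in the order of the enumeration of \<open>'p\<close>. Where a
  residual vanishes, division by zero makes \<open>gs_q M m = 0\<close>; \<open>gs_regular\<close> excludes this.\<close>
fun gs_q :: "complex^('p::enum)^'n \<Rightarrow> nat \<Rightarrow> complex^'n" where
  "gs_q M m = (let u = ncol M m - (\<Sum>j<m. cinner (gs_q M j) (ncol M m) *s gs_q M j)
               in (1 / complex_of_real (sqrt (Re (cinner u u)))) *s u)"

declare gs_q.simps [simp del]

definition gs_u :: "complex^('p::enum)^'n \<Rightarrow> nat \<Rightarrow> complex^'n" where
  "gs_u M m = ncol M m - (\<Sum>j<m. cinner (gs_q M j) (ncol M m) *s gs_q M j)"

definition gs_r :: "complex^('p::enum)^'n \<Rightarrow> nat \<Rightarrow> real" where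
  "gs_r M m = sqrt (Re (cinner (gs_u M m) (gs_u M m)))"

lemma gs_q_eq: "gs_q M m = (1 / complex_of_real (gs_r M m)) *s gs_u M m"
  by (subst gs_q.simps) (simp add: gs_u_def gs_r_def Let_def)

definition gs_regular :: "complex^('p::enum)^'n \<Rightarrow> bool" where
  "gs_regular M \<longleftrightarrow> (\<forall>m<CARD('p). gs_u M m \<noteq> 0)"

lemma gs_r_pos: "gs_u M m \<noteq> 0 \<Longrightarrow> 0 < gs_r M m"
  by (simp add: gs_r_def cinner_self_Re_pos_iff)

lemma gs_u_eq: "gs_u M m \<noteq> 0 \<Longrightarrow> gs_u M m = complex_of_real (gs_r M m) *s gs_q M m"
  using gs_r_pos[of M m] by (simp add: gs_q_eq vector_smult_assoc)

lemma cinner_gs_u_self: "cinner (gs_u M m) (gs_u M m) = complex_of_real ((gs_r M m)^2)"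
proof -
  have "Im (cinner (gs_u M m) (gs_u M m)) = 0" by (simp add: cinner_self)
  moreover have "0 \<le> Re (cinner (gs_u M m) (gs_u M m))" by (simp add: cinner_self sum_nonneg)
  ultimately show ?thesis by (simp add: gs_r_def complex_eq_iff)
qed

definition gs_Q :: "complex^('p::enum)^'n \<Rightarrow> complex^('p::enum)^'n" where
  "gs_Q M = (\<chi> i c. gs_q M (ix c) $ i)"

lemma ncol_ix: "ncol M (ix c) = (\<chi> i. M$i$c)"
  by (simp add: ncol_def)

lemma adj_mult_gs_Q_nth: "adj_mult (gs_Q M) M $ a $ c = cinner (gs_q M (ix a)) (ncol M (ix c))"
  by (simp add: adj_mult_def gs_Q_def cinner_def ncol_def)

lemma cinner_gs_q_gs_u:
  assumes orth: "\<And>i j. i < m \<Longrightarrow> j < m \<Longrightarrow> cinner (gs_q M i) (gs_q M j) = (if i = j then 1 else 0)"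
    and "j < m"
  shows "cinner (gs_q M j) (gs_u M m) = 0"
proof -
  have "cinner (gs_q M j) (gs_u M m) = cinner (gs_q M j) (ncol M m) - (\<Sum>j'<m. cinner (gs_q M j') (ncol M m) * cinner (gs_q M j) (gs_q M j'))"
    by (simp add: gs_u_def cinner_diff_right cinner_sum_right cinner_scale_right)
  also have "(\<Sum>j'<m. cinner (gs_q M j') (ncol M m) * cinner (gs_q M j) (gs_q M j')) = (\<Sum>j'<m. if j = j' then cinner (gs_q M j') (ncol M m) else 0)"
    by (rule sum.cong) (auto simp: orth assms(2))
  also have "\<dots> = cinner (gs_q M j) (ncol M m)" using assms(2) by simp
  finally show ?thesis by simp
qed

lemma gs_orthonormal_upto:
  fixes M :: "complex^('p::enum)^'n"
  assumes "gs_regular M"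
  shows "m < CARD('p) \<Longrightarrow> i \<le> m \<Longrightarrow> j \<le> m \<Longrightarrow> cinner (gs_q M i) (gs_q M j) = (if i = j then 1 else 0)"
proof (induction m arbitrary: i j)
  case 0
  then have "gs_u M 0 \<noteq> 0" using assms by (simp add: gs_regular_def)
  then have "gs_r M 0 \<noteq> 0" using gs_r_pos by force
  with 0 show ?case
    by (simp add: gs_q_eq cinner_scale_left cinner_scale_right cinner_gs_u_self power2_eq_square)
next
  case (Suc m)
  have IH: "\<And>i j. i < Suc m \<Longrightarrow> j < Suc m \<Longrightarrow> cinner (gs_q M i) (gs_q M j) = (if i = j then 1 else 0)"
    using Suc by simp
  have ok: "gs_u M (Suc m) \<noteq> 0" using assms Suc.prems by (simp add: gs_regular_def)
  then have r: "gs_r M (Suc m) \<noteq> 0" using gs_r_pos by force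
  have a: "cinner (gs_q M j') (gs_q M (Suc m)) = 0" if "j' < Suc m" for j'
    using cinner_gs_q_gs_u[OF IH that] by (simp add: gs_q_eq cinner_scale_right)
  have b: "cinner (gs_q M (Suc m)) (gs_q M j') = 0" if "j' < Suc m" for j'
    using a[OF that] by (metis cnj_cinner complex_cnj_zero)
  have c: "cinner (gs_q M (Suc m)) (gs_q M (Suc m)) = 1"
    using r by (simp add: gs_q_eq cinner_scale_left cinner_scale_right cinner_gs_u_self power2_eq_square)
  show ?case
  proof (cases "i = Suc m")
    case True
    then show ?thesis using b c Suc.prems by (cases "j = Suc m") auto
  next
    case False
    then show ?thesis using a IH Suc.prems by (cases "j = Suc m") auto
  qed
qed

lemma gs_orthonormal:
  fixes M :: "complex^('p::enum)^'n"
  assumes "gs_regular M" "i < CARD('p)" "j < CARD('p)"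
  shows "cinner (gs_q M i) (gs_q M j) = (if i = j then 1 else 0)"
  using gs_orthonormal_upto[OF assms(1), of "max i j" i j] assms by (simp add: max_def)

lemma ncol_gs_split:
  fixes M :: "complex^('p::enum)^'n"
  assumes "gs_regular M" "m < CARD('p)"
  shows "ncol M m = complex_of_real (gs_r M m) *s gs_q M m + (\<Sum>j<m. cinner (gs_q M j) (ncol M m) *s gs_q M j)"
proof -
  have "gs_u M m \<noteq> 0" using assms by (simp add: gs_regular_def)
  then show ?thesis using gs_u_eq[of M m] unfolding gs_u_def by (simp add: diff_eq_eq)
qed

lemma cinner_gs_q_ncol:
  fixes M :: "complex^('p::enum)^'n"
  assumes ok: "gs_regular M" and m: "m < CARD('p)" and j: "j < CARD('p)" and jm: "m \<le> j"
  shows "cinner (gs_q M j) (ncol M m) = (if j = m then complex_of_real (gs_r M m) else 0)"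
proof -
  have "cinner (gs_q M j) (ncol M m) = complex_of_real (gs_r M m) * cinner (gs_q M j) (gs_q M m) + (\<Sum>j'<m. cinner (gs_q M j') (ncol M m) * cinner (gs_q M j) (gs_q M j'))"
    by (subst ncol_gs_split[OF ok m]) (simp add: cinner_add_right cinner_sum_right cinner_scale_right)
  also have "(\<Sum>j'<m. cinner (gs_q M j') (ncol M m) * cinner (gs_q M j) (gs_q M j')) = 0"
    by (rule sum.neutral) (use m j jm in \<open>auto simp: gs_orthonormal[OF ok]\<close>)
  finally show ?thesis using m j jm by (simp add: gs_orthonormal[OF ok])
qed

lemma ncol_gs_expansion:
  fixes M :: "complex^('p::enum)^'n"
  assumes ok: "gs_regular M" and m: "m < CARD('p)"
  shows "ncol M m = (\<Sum>j<CARD('p). cinner (gs_q M j) (ncol M m) *s gs_q M j)"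
proof -
  have "(\<Sum>j<CARD('p). cinner (gs_q M j) (ncol M m) *s gs_q M j) = (\<Sum>j\<in>{..<m} \<union> {m..<CARD('p)}. cinner (gs_q M j) (ncol M m) *s gs_q M j)"
    using m by (intro sum.cong) auto
  also have "\<dots> = (\<Sum>j<m. cinner (gs_q M j) (ncol M m) *s gs_q M j) + (\<Sum>j\<in>{m..<CARD('p)}. cinner (gs_q M j) (ncol M m) *s gs_q M j)"
    by (rule sum.union_disjoint) auto
  also have "(\<Sum>j\<in>{m..<CARD('p)}. cinner (gs_q M j) (ncol M m) *s gs_q M j) = (\<Sum>j\<in>{m..<CARD('p)}. if j = m then complex_of_real (gs_r M m) *s gs_q M m else 0)"
    by (rule sum.cong) (auto simp: cinner_gs_q_ncol[OF ok m])
  also have "\<dots> = complex_of_real (gs_r M m) *s gs_q M m" using m by simp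
  finally show ?thesis using ncol_gs_split[OF ok m] by (simp add: add.commute)
qed

lemma gs_unitary:
  fixes M :: "complex^('p::enum)^'n"
  assumes ok: "gs_regular M"
  shows "adj_mult (gs_Q M) (gs_Q M) = mat 1"
proof -
  have "adj_mult (gs_Q M) (gs_Q M) $ a $ b = cinner (gs_q M (ix a)) (gs_q M (ix b))" for a b
    by (simp add: adj_mult_def gs_Q_def cinner_def)
  then show ?thesis by (simp add: vec_eq_iff mat_def gs_orthonormal[OF ok] ix_eq_iff)
qed

lemma gs_upper:
  fixes M :: "complex^('p::enum)^'n"
  assumes ok: "gs_regular M"
  shows "upper_pos (adj_mult (gs_Q M) M)"
proof -
  have 1: "adj_mult (gs_Q M) M $ a $ c = 0" if "ix c < ix a" for a c
    using that cinner_gs_q_ncol[OF ok, of "ix c" "ix a"] by (simp add: adj_mult_gs_Q_nth)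
  have 2: "adj_mult (gs_Q M) M $ a $ a = complex_of_real (gs_r M (ix a))" for a
    using cinner_gs_q_ncol[OF ok, of "ix a" "ix a"] by (simp add: adj_mult_gs_Q_nth)
  have 3: "gs_r M (ix a) > 0" for a :: 'p
    using ok by (simp add: gs_regular_def gs_r_pos)
  show ?thesis unfolding upper_pos_def using 1 2 3 by simp
qed

lemma gs_decomp:
  fixes M :: "complex^('p::enum)^'n"
  assumes ok: "gs_regular M"
  shows "gs_Q M ** adj_mult (gs_Q M) M = M"
proof -
  have "(gs_Q M ** adj_mult (gs_Q M) M) $ i $ c = M $ i $ c" for i c
  proof -
    have "(gs_Q M ** adj_mult (gs_Q M) M) $ i $ c = (\<Sum>a::'p\<in>UNIV. gs_q M (ix a) $ i * cinner (gs_q M (ix a)) (ncol M (ix c)))"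
      by (simp add: matrix_matrix_mult_def adj_mult_gs_Q_nth) (simp add: gs_Q_def)
    also have "\<dots> = (\<Sum>j<CARD('p). gs_q M j $ i * cinner (gs_q M j) (ncol M (ix c)))"
      by (simp add: sum_UNIV_sl)
    also have "\<dots> = (\<Sum>j<CARD('p). cinner (gs_q M j) (ncol M (ix c)) *s gs_q M j) $ i"
      by (simp add: sum_component mult.commute)
    also have "\<dots> = ncol M (ix c) $ i" using ncol_gs_expansion[OF ok, of "ix c"] by simp
    finally show ?thesis by (simp add: ncol_ix)
  qed
  then show ?thesis by (simp add: vec_eq_iff)
qed

lemma sum_lessThan_split3:
  fixes f :: "nat \<Rightarrow> 'a::comm_monoid_add"
  assumes "m < P"
  shows "(\<Sum>j<P. f j) = (\<Sum>j<m. f j) + f m + (\<Sum>j\<in>{Suc m..<P}. f j)"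
proof -
  have "{..<P} = {..<m} \<union> {m} \<union> {Suc m..<P}" using assms by auto
  then have "(\<Sum>j<P. f j) = (\<Sum>j\<in>{..<m} \<union> {m} \<union> {Suc m..<P}. f j)" by simp
  also have "\<dots> = (\<Sum>j\<in>{..<m} \<union> {m}. f j) + (\<Sum>j\<in>{Suc m..<P}. f j)"
    by (rule sum.union_disjoint) auto
  also have "(\<Sum>j\<in>{..<m} \<union> {m}. f j) = (\<Sum>j<m. f j) + f m"
    by (subst sum.union_disjoint) auto
  finally show ?thesis .
qed

lemma cinner_ncol_unitary:
  assumes "adj_mult Q Q = mat 1" "a < CARD('p)" "b < CARD('p)"
  shows "cinner (ncol Q a) (ncol (Q :: complex^('p::enum)^'n) b) = (if a = b then 1 else 0)"
proof -
  have "cinner (ncol Q a) (ncol Q b) = adj_mult Q Q $ sl a $ sl b" by (simp add: adj_mult_def cinner_def ncol_def)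
  then show ?thesis using assms by (simp add: mat_def) (metis ix_sl mod_less)
qed

lemma ncol_matrix_mult:
  "ncol (Q ** R) m = (\<Sum>j<CARD('p). R$(sl j)$(sl m) *s ncol Q j)" for R :: "complex^('p::enum)^('p::enum)"
  by (simp add: vec_eq_iff ncol_def matrix_matrix_mult_def sum_component sum_UNIV_sl mult.commute)

lemma gs_qr_unique:
  fixes M Q :: "complex^('p::enum)^'n" and R :: "complex^('p::enum)^('p::enum)"
  assumes QQ: "adj_mult Q Q = mat 1" and R: "upper_pos R" and MQR: "M = Q ** R"
  shows "gs_regular M \<and> gs_Q M = Q"
proof -
  let ?P = "CARD('p)"
  have Rdiag: "R$(sl m)$(sl m) = complex_of_real (Re (R$(sl m)$(sl m))) \<and> Re (R$(sl m)$(sl m)) > 0" for m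
    using R unfolding upper_pos_def by (simp add: complex_eq_iff)
  have Rup: "R$(sl j)$(sl m) = 0" if "m < j" "j < ?P" for j m
  proof -
    have "m mod ?P < j" using that by (meson le_less_trans mod_less_eq_dividend)
    then show ?thesis using R that unfolding upper_pos_def by simp
  qed
  have main: "m < ?P \<Longrightarrow> gs_u M m \<noteq> 0 \<and> gs_q M m = ncol Q m" for m
  proof (induction m rule: less_induct)
    case (less m)
    define r where "r = Re (R$(sl m)$(sl m))"
    have r: "R$(sl m)$(sl m) = complex_of_real r" "r > 0" using Rdiag[of m] by (auto simp: r_def)
    have coeff: "cinner (gs_q M j) (ncol M m) = R$(sl j)$(sl m)" if "j < m" for j
    proof -
      have "cinner (gs_q M j) (ncol M m) = (\<Sum>j'<?P. R$(sl j')$(sl m) * cinner (ncol Q j) (ncol Q j'))"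
        using less.IH[of j] that less.prems by (simp add: MQR ncol_matrix_mult cinner_sum_right cinner_scale_right)
      also have "\<dots> = (\<Sum>j'<?P. if j = j' then R$(sl j')$(sl m) else 0)"
        by (rule sum.cong) (use that less.prems in \<open>auto simp: cinner_ncol_unitary[OF QQ]\<close>)
      finally show ?thesis using that less.prems by simp
    qed
    have "gs_u M m = ncol M m - (\<Sum>j<m. R$(sl j)$(sl m) *s ncol Q j)"
      unfolding gs_u_def using less.IH less.prems coeff by (intro arg_cong2[where f=minus] sum.cong) auto
    also have "ncol M m = (\<Sum>j<m. R$(sl j)$(sl m) *s ncol Q j) + R$(sl m)$(sl m) *s ncol Q m"
      using less.prems by (simp add: MQR ncol_matrix_mult sum_lessThan_split3[OF less.prems] Rup)
    finally have u: "gs_u M m = complex_of_real r *s ncol Q m" by (simp add: r)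
    have q1: "cinner (ncol Q m) (ncol Q m) = 1" using cinner_ncol_unitary[OF QQ] less.prems by simp
    have "cinner (gs_u M m) (gs_u M m) = complex_of_real (r^2)"
      by (simp add: u cinner_scale_left cinner_scale_right q1 power2_eq_square)
    then have "gs_r M m = r" using r by (simp add: gs_r_def)
    moreover have "ncol Q m \<noteq> 0" using q1 by (auto simp: cinner_def)
    ultimately show ?case using u r by (auto simp: gs_q_eq vector_smult_assoc vec_eq_iff)
  qed
  have "gs_regular M" using main by (simp add: gs_regular_def)
  moreover have "gs_Q M = Q" using main by (simp add: gs_Q_def vec_eq_iff ncol_ix)
  ultimately show ?thesis by simp
qed

lemma ncol_eq_mult_axis: "ncol M m = M *v axis (sl m) 1"
  by (simp add: ncol_def matrix_vector_mult_def vec_eq_iff axis_def if_distrib cong: if_cong)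

lemma gs_u_eq_mult_vec:
  fixes M :: "complex^('p::enum)^'n"
  assumes "m < CARD('p)" "\<forall>j<m. gs_u M j \<noteq> 0"
  shows "\<exists>z. (\<forall>c. m < ix c \<longrightarrow> z$c = 0) \<and> z$(sl m) = 1 \<and> gs_u M m = M *v z"
  using assms
proof (induction m rule: less_induct)
  case (less m)
  then obtain Z where Z: "\<And>j. j < m \<Longrightarrow> (\<forall>c. j < ix c \<longrightarrow> Z j$c = 0) \<and> gs_u M j = M *v Z j"
    by (metis order.strict_trans)
  define z where "z = axis (sl m) 1 - (\<Sum>j<m. cinner (gs_q M j) (ncol M m) *s ((1 / complex_of_real (gs_r M j)) *s Z j))"
  have "M *v z = gs_u M m"
    unfolding z_def gs_u_def matrix_vector_mult_diff_distrib matrix_vector_mult_sum matrix_vector_mult_scale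
      ncol_eq_mult_axis[symmetric]
    by (intro arg_cong2[where f=minus] refl sum.cong) (auto simp: gs_q_eq Z)
  moreover have "z$c = 0" if "m < ix c" for c
  proof -
    have "c \<noteq> sl m" using that less.prems by auto
    moreover have "Z j $ c = 0" if "j < m" for j using Z[OF that] \<open>m < ix c\<close> that by auto
    ultimately show ?thesis by (simp add: z_def sum_component axis_def)
  qed
  moreover have "z$(sl m) = 1"
  proof -
    have "Z j $ (sl m) = 0" if "j < m" for j using Z[OF that] that less.prems by auto
    then show ?thesis by (simp add: z_def sum_component axis_def)
  qed
  ultimately show ?case by metis
qed

lemma gs_regular_if_inj:
  fixes M :: "complex^('p::enum)^'n"
  assumes inj: "inj ((*v) M)"
  shows "gs_regular M"
proof -
  have "m \<le> CARD('p) \<Longrightarrow> \<forall>j<m. gs_u M j \<noteq> 0" for m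
  proof (induction m)
    case (Suc m)
    then have prev: "\<forall>j<m. gs_u M j \<noteq> 0" by simp
    obtain z where z: "z$(sl m) = 1" "gs_u M m = M *v z"
      using gs_u_eq_mult_vec[OF _ prev] Suc.prems by auto
    have "gs_u M m \<noteq> 0"
    proof
      assume "gs_u M m = 0"
      then have "M *v z = M *v 0" using z by simp
      then have "z = 0" using inj by (rule injD[rotated])
      then show False using z by simp
    qed
    then show ?case using prev less_Suc_eq by auto
  qed simp
  then show ?thesis unfolding gs_regular_def by blast
qed

lemma gs_Q_mat_cnj:
  fixes M :: "complex^('p::enum)^'n"
  assumes ok: "gs_regular M"
  shows "gs_Q (mat_cnj M) = mat_cnj (gs_Q M)"
proof -
  have "mat_cnj M = mat_cnj (gs_Q M) ** mat_cnj (adj_mult (gs_Q M) M)" using gs_decomp[OF ok] mat_cnj_mult by metis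
  moreover have "adj_mult (mat_cnj (gs_Q M)) (mat_cnj (gs_Q M)) = mat 1" by (simp add: mat_cnj_adj_mult gs_unitary[OF ok] mat_cnj_mat_1)
  moreover have "upper_pos (mat_cnj (adj_mult (gs_Q M) M))" by (rule upper_pos_mat_cnj[OF gs_upper[OF ok]])
  ultimately show ?thesis using gs_qr_unique by blast
qed

section \<open>The t-QR decomposition slice by slice\<close>

abbreviation hat :: "real^('l::enum)^'p^'n \<Rightarrow> 'l \<Rightarrow> complex^'p^'n" where
  "hat A k \<equiv> fslice (dft A) k"

lemma hat_tprod: "hat (A \<star> B) k = hat A k ** hat B k"
  for A :: "real^('l::enum)^'p^'n" and B :: "real^('l::enum)^'q^'p"
  by (simp add: fslice_def matrix_matrix_mult_def vec_eq_iff dft_tprod)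

lemma hat_ttrans_tprod: "hat (ttrans A \<star> B) k = adj_mult (hat A k) (hat B k)"
  for A :: "real^('l::enum)^'p^'n" and B :: "real^('l::enum)^'q^'n"
  by (simp add: fslice_def adj_mult_def vec_eq_iff dft_tprod dft_ttrans)

lemma hat_tid: "hat (tid :: real^('l::enum)^'p^'p) k = mat 1"
  by (simp add: fslice_def dft_tid mat_def vec_eq_iff)

lemma hat_tneg: "hat A (tneg k) = mat_cnj (hat A k)"
  for A :: "real^('l::enum)^'p^'n"
  by (simp add: fslice_def mat_cnj_def vec_eq_iff dft_tneg)

lemma hat_add: "hat (A + B) k = hat A k + hat B k"
  by (simp add: dft_add fslice_def vec_eq_iff)

lemma hat_scaleR: "hat (c *\<^sub>R A) k = c *\<^sub>R hat A k"
  by (simp add: dft_scaleR fslice_def vec_eq_iff)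

lemma hat_eq_iff: "(\<forall>k. hat A k = hat B k) \<longleftrightarrow> A = B"
  for A B :: "real^('l::enum)^'p^'n"
proof
  assume "\<forall>k. hat A k = hat B k"
  then have "dft A = dft B" by (simp add: fslice_def vec_eq_iff)
  then show "A = B" by (simp add: dft_inject)
qed simp

lemma tprod_tid [simp]: "A \<star> tid = A"
  for A :: "real^('l::enum)^'p^'n"
  unfolding hat_eq_iff[symmetric] by (simp add: hat_tprod hat_tid)

lemma stiefel_iff_hat: "X \<in> stiefel \<longleftrightarrow> (\<forall>k. adj_mult (hat X k) (hat X k) = mat 1)"
  for X :: "real^('l::enum)^'p^'n"
  unfolding stiefel_def using hat_eq_iff[of "ttrans X \<star> X" tid]
  by (simp add: hat_ttrans_tprod hat_tid)

lemma Cupp_pos_iff: "C \<in> Cupp_pos \<longleftrightarrow> (\<forall>k. upper_pos (fslice C k))"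
  by (auto simp: Cupp_pos_def upper_pos_def fslice_def)

lemma dft_tid_Cupp_pos: "dft (tid :: real^('l::enum)^('p::enum)^('p::enum)) \<in> Cupp_pos"
  unfolding Cupp_pos_iff by (simp add: hat_tid upper_pos_mat_1)

definition tqr_domain :: "(real^('l::enum)^('p::enum)^'n) set" where
  "tqr_domain = {A. \<forall>k. gs_regular (hat A k)}"

definition qf_gs :: "real^('l::enum)^('p::enum)^'n \<Rightarrow> real^('l::enum)^('p::enum)^'n" where
  "qf_gs A = idft (\<chi> i j k. gs_Q (hat A k) $i$j)"

lemma hat_qf_gs:
  fixes A :: "real^('l::enum)^('p::enum)^'n"
  assumes "A \<in> tqr_domain"
  shows "hat (qf_gs A) k = gs_Q (hat A k)"
proof -
  have "conj_symmetric (\<chi> i j k. gs_Q (hat A k) $i$j)"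
    using assms unfolding conj_symmetric_def tqr_domain_def
    by (simp add: hat_tneg gs_Q_mat_cnj) (simp add: mat_cnj_def)
  then have "dft (qf_gs A) = (\<chi> i j k. gs_Q (hat A k) $i$j)" unfolding qf_gs_def by (rule dft_idft)
  then show ?thesis by (simp add: fslice_def vec_eq_iff)
qed

lemma qf_gs_in_stiefel: "A \<in> tqr_domain \<Longrightarrow> qf_gs A \<in> stiefel"
  by (simp add: stiefel_iff_hat hat_qf_gs gs_unitary tqr_domain_def)

lemma tqr_unique:
  fixes A Q :: "real^('l::enum)^('p::enum)^'n"
  assumes "Q \<in> stiefel" "dft R \<in> Cupp_pos" "A = Q \<star> R"
  shows "A \<in> tqr_domain" and "qf_gs A = Q"
proof -
  have *: "gs_regular (hat A k) \<and> gs_Q (hat A k) = hat Q k" for k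
  proof (rule gs_qr_unique)
    show "adj_mult (hat Q k) (hat Q k) = mat 1" using assms(1) by (simp add: stiefel_iff_hat)
    show "upper_pos (hat R k)" using assms(2) by (simp add: Cupp_pos_iff)
    show "hat A k = hat Q k ** hat R k" using assms(3) by (simp add: hat_tprod)
  qed
  then show A: "A \<in> tqr_domain" by (simp add: tqr_domain_def)
  show "qf_gs A = Q" using * hat_qf_gs[OF A] hat_eq_iff by metis
qed

lemma qf_eq_qf_gs:
  fixes A :: "real^('l::enum)^('p::enum)^'n"
  assumes A: "A \<in> tqr_domain"
  shows "qf A = qf_gs A"
  unfolding qf_def
proof (rule the_equality)
  define R where "R = ttrans (qf_gs A) \<star> A"
  have hat_R: "hat R k = adj_mult (gs_Q (hat A k)) (hat A k)" for k
    by (simp add: R_def hat_ttrans_tprod hat_qf_gs[OF A])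
  have "dft R \<in> Cupp_pos"
    using A by (simp add: Cupp_pos_iff hat_R gs_upper tqr_domain_def)
  moreover have "A = qf_gs A \<star> R"
    using A by (simp add: hat_eq_iff[symmetric] hat_tprod hat_R hat_qf_gs gs_decomp tqr_domain_def)
  ultimately show "qf_gs A \<in> stiefel \<and> (\<exists>R. dft R \<in> Cupp_pos \<and> A = qf_gs A \<star> R)"
    using qf_gs_in_stiefel[OF A] by blast
next
  fix Q assume "Q \<in> stiefel \<and> (\<exists>R. dft R \<in> Cupp_pos \<and> A = Q \<star> R)"
  then show "Q = qf_gs A" using tqr_unique(2) by metis
qed

lemma stiefel_in_tqr_domain: "X \<in> stiefel \<Longrightarrow> X \<in> tqr_domain"
  for X :: "real^('l::enum)^('p::enum)^'n"
  using tqr_unique(1)[of X tid X] dft_tid_Cupp_pos by simp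

lemma qf_stiefel: "X \<in> stiefel \<Longrightarrow> qf X = X"
  for X :: "real^('l::enum)^('p::enum)^'n"
proof -
  assume X: "X \<in> stiefel"
  have "qf_gs X = X" using tqr_unique(2)[OF X dft_tid_Cupp_pos, of X] by simp
  then show "qf X = X" using qf_eq_qf_gs[OF stiefel_in_tqr_domain[OF X]] by simp
qed

section \<open>Elementary smooth functions\<close>

text \<open>A class of \<open>C\<^sup>\<infinity>\<close> functions given by their formulas; being closed under
  differentiation (\<open>elem_smooth_has_derivative\<close>), it yields smoothness of Gram-Schmidt
  by induction over its construction, without a calculus of higher derivatives.\<close>
inductive elem_smooth :: "'a::real_normed_vector set \<Rightarrow> ('a \<Rightarrow> complex) \<Rightarrow> bool" for U where
  const: "elem_smooth U (\<lambda>x. c)"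
| real_linear: "bounded_linear f \<Longrightarrow> elem_smooth U (\<lambda>x. complex_of_real (f x))"
| add: "elem_smooth U f \<Longrightarrow> elem_smooth U g \<Longrightarrow> elem_smooth U (\<lambda>x. f x + g x)"
| mult: "elem_smooth U f \<Longrightarrow> elem_smooth U g \<Longrightarrow> elem_smooth U (\<lambda>x. f x * g x)"
| cnj: "elem_smooth U f \<Longrightarrow> elem_smooth U (\<lambda>x. cnj (f x))"
| Re: "elem_smooth U f \<Longrightarrow> elem_smooth U (\<lambda>x. complex_of_real (Re (f x)))"
| inverse: "elem_smooth U f \<Longrightarrow> (\<forall>x\<in>U. f x \<noteq> 0) \<Longrightarrow> elem_smooth U (\<lambda>x. inverse (f x))"
| sqrt: "elem_smooth U f \<Longrightarrow> (\<forall>x\<in>U. Re (f x) > 0) \<Longrightarrow> elem_smooth U (\<lambda>x. complex_of_real (sqrt (Re (f x))))"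

lemma elem_smooth_minus: "elem_smooth U f \<Longrightarrow> elem_smooth U (\<lambda>x. - f x)"
  using elem_smooth.mult[OF elem_smooth.const[of U "-1"]] by simp

lemma elem_smooth_diff: "elem_smooth U f \<Longrightarrow> elem_smooth U g \<Longrightarrow> elem_smooth U (\<lambda>x. f x - g x)"
  using elem_smooth.add[OF _ elem_smooth_minus] by simp

lemma elem_smooth_sum: "finite S \<Longrightarrow> (\<And>j. j \<in> S \<Longrightarrow> elem_smooth U (f j)) \<Longrightarrow> elem_smooth U (\<lambda>x. \<Sum>j\<in>S. f j x)"
proof (induction S rule: finite_induct)
  case empty then show ?case using elem_smooth.const[of U 0] by simp
next
  case (insert a S)
  then show ?case by (simp add: elem_smooth.add)
qed

lemma elem_smooth_subset: "elem_smooth U f \<Longrightarrow> V \<subseteq> U \<Longrightarrow> elem_smooth V f"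
  by (induction rule: elem_smooth.induct) (auto intro: elem_smooth.intros)

lemma elem_smooth_compose_linear:
  "elem_smooth U f \<Longrightarrow> bounded_linear L \<Longrightarrow> elem_smooth (L -` U) (\<lambda>x. f (L x))"
  by (induction rule: elem_smooth.induct) (auto intro: elem_smooth.intros bounded_linear_compose)

lemma has_derivative_sqrt_Re:
  fixes f :: "'a::real_normed_vector \<Rightarrow> complex"
  assumes "(f has_derivative Df) (at x)" "Re (f x) > 0"
  shows "((\<lambda>x. complex_of_real (sqrt (Re (f x)))) has_derivative
    (\<lambda>h. complex_of_real (inverse (sqrt (Re (f x))) / 2 * Re (Df h)))) (at x)"
proof -
  have "((\<lambda>x. Re (f x)) has_derivative (\<lambda>h. Re (Df h))) (at x)"
    using assms(1) by (rule bounded_linear.has_derivative[OF bounded_linear_Re])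
  moreover have "(sqrt has_derivative (\<lambda>y. inverse (sqrt (Re (f x))) / 2 * y)) (at (Re (f x)))"
    using DERIV_real_sqrt[OF assms(2)] has_field_derivative_imp_has_derivative by blast
  ultimately have "((\<lambda>x. sqrt (Re (f x))) has_derivative (\<lambda>h. inverse (sqrt (Re (f x))) / 2 * Re (Df h))) (at x)"
    using has_derivative_compose by blast
  then show ?thesis by (rule bounded_linear.has_derivative[OF bounded_linear_of_real])
qed

lemma elem_smooth_has_derivative:
  "elem_smooth U f \<Longrightarrow> \<exists>D. (\<forall>x\<in>U. (f has_derivative D x) (at x)) \<and> (\<forall>h. elem_smooth U (\<lambda>x. D x h))"
proof (induction rule: elem_smooth.induct)
  case (const c)
  show ?case by (rule exI[of _ "\<lambda>x h. 0"]) (auto intro: elem_smooth.const)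
next
  case (real_linear f)
  have "bounded_linear (\<lambda>x. complex_of_real (f x))"
    using bounded_linear_compose[OF bounded_linear_of_real real_linear] by simp
  then show ?case
    by (intro exI[of _ "\<lambda>x h. complex_of_real (f h)"]) (auto intro: elem_smooth.const bounded_linear_imp_has_derivative)
next
  case (add f g)
  then obtain Df Dg where f: "\<forall>x\<in>U. (f has_derivative Df x) (at x)" "\<forall>h. elem_smooth U (\<lambda>x. Df x h)"
    and g: "\<forall>x\<in>U. (g has_derivative Dg x) (at x)" "\<forall>h. elem_smooth U (\<lambda>x. Dg x h)" by blast
  show ?case
    by (rule exI[of _ "\<lambda>x h. Df x h + Dg x h"]) (use f g in \<open>auto intro: has_derivative_add elem_smooth.add\<close>)
next
  case (mult f g)
  then obtain Df Dg where f: "\<forall>x\<in>U. (f has_derivative Df x) (at x)" "\<forall>h. elem_smooth U (\<lambda>x. Df x h)"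
    and g: "\<forall>x\<in>U. (g has_derivative Dg x) (at x)" "\<forall>h. elem_smooth U (\<lambda>x. Dg x h)" by blast
  show ?case
    by (rule exI[of _ "\<lambda>x h. f x * Dg x h + Df x h * g x"])
      (use f g mult.hyps in \<open>auto intro!: has_derivative_mult elem_smooth.add elem_smooth.mult\<close>)
next
  case (cnj f)
  then obtain Df where f: "\<forall>x\<in>U. (f has_derivative Df x) (at x)" "\<forall>h. elem_smooth U (\<lambda>x. Df x h)" by blast
  show ?case
    by (rule exI[of _ "\<lambda>x h. cnj (Df x h)"])
      (use f in \<open>auto intro: bounded_linear.has_derivative[OF bounded_linear_cnj] elem_smooth.cnj\<close>)
next
  case (Re f)
  then obtain Df where f: "\<forall>x\<in>U. (f has_derivative Df x) (at x)" "\<forall>h. elem_smooth U (\<lambda>x. Df x h)" by blast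
  have bl: "bounded_linear (\<lambda>z. complex_of_real (Re z))"
    using bounded_linear_compose[OF bounded_linear_of_real bounded_linear_Re] by simp
  show ?case
    by (rule exI[of _ "\<lambda>x h. complex_of_real (Re (Df x h))"])
      (use f in \<open>auto intro: bounded_linear.has_derivative[OF bl] elem_smooth.Re\<close>)
next
  case (inverse f)
  then obtain Df where f: "\<forall>x\<in>U. (f has_derivative Df x) (at x)" "\<forall>h. elem_smooth U (\<lambda>x. Df x h)" by blast
  have "elem_smooth U (\<lambda>x. - (inverse (f x) * Df x h * inverse (f x)))" for h
    using f inverse.hyps by (intro elem_smooth_minus elem_smooth.mult elem_smooth.inverse) auto
  then show ?case
    by (intro exI[of _ "\<lambda>x h. - (inverse (f x) * Df x h * inverse (f x))"]) (use f inverse.hyps in \<open>auto intro: has_derivative_inverse\<close>)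
next
  case (sqrt f)
  then obtain Df where f: "\<forall>x\<in>U. (f has_derivative Df x) (at x)" "\<forall>h. elem_smooth U (\<lambda>x. Df x h)" by blast
  let ?D = "\<lambda>x h. complex_of_real (inverse (sqrt (Re (f x))) / 2 * Re (Df x h))"
  have "elem_smooth U (\<lambda>x. ?D x h)" for h
  proof -
    have "elem_smooth U (\<lambda>x. inverse (complex_of_real (sqrt (Re (f x)))) * complex_of_real (1/2) *
        complex_of_real (Re (Df x h)))"
      using f sqrt.hyps by (intro elem_smooth.mult elem_smooth.inverse elem_smooth.sqrt elem_smooth.const elem_smooth.Re) auto
    then show ?thesis by simp
  qed
  then show ?case
    using f sqrt.hyps has_derivative_sqrt_Re by (intro exI[of _ ?D]) blast
qed

lemma elem_smooth_continuous_on: "elem_smooth U f \<Longrightarrow> continuous_on U f"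
  by (meson elem_smooth_has_derivative continuous_at_imp_continuous_on has_derivative_continuous)

definition elem_smooth_vec :: "'a::real_normed_vector set \<Rightarrow> ('a \<Rightarrow> 'b::euclidean_space) \<Rightarrow> bool" where
  "elem_smooth_vec U F \<longleftrightarrow> (\<forall>b\<in>Basis. elem_smooth U (\<lambda>x. complex_of_real (F x \<bullet> b)))"

lemma elem_smooth_vec_compose_linear:
  "elem_smooth_vec U F \<Longrightarrow> bounded_linear L \<Longrightarrow> elem_smooth_vec (L -` U) (\<lambda>x. F (L x))"
  unfolding elem_smooth_vec_def using elem_smooth_compose_linear by blast

lemma elem_smooth_vec_has_derivative:
  assumes "elem_smooth_vec U F"
  shows "\<exists>DF. (\<forall>x\<in>U. (F has_derivative DF x) (at x)) \<and> (\<forall>h. elem_smooth_vec U (\<lambda>x. DF x h))"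
proof -
  have "\<forall>b\<in>Basis. \<exists>D. (\<forall>x\<in>U. ((\<lambda>x. complex_of_real (F x \<bullet> b)) has_derivative D x) (at x)) \<and> (\<forall>h. elem_smooth U (\<lambda>x. D x h))"
    using assms elem_smooth_has_derivative unfolding elem_smooth_vec_def by blast
  then obtain D where D: "\<And>b. b \<in> Basis \<Longrightarrow> (\<forall>x\<in>U. ((\<lambda>x. complex_of_real (F x \<bullet> b)) has_derivative D b x) (at x)) \<and> (\<forall>h. elem_smooth U (\<lambda>x. D b x h))"
    by metis
  define DF where "DF x h = (\<Sum>b\<in>Basis. Re (D b x h) *\<^sub>R b)" for x h
  have "(F has_derivative DF x) (at x)" if x: "x \<in> U" for x
  proof -
    have 1: "((\<lambda>x. F x \<bullet> b) has_derivative (\<lambda>h. Re (D b x h))) (at x)" if b: "b \<in> Basis" for b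
      using bounded_linear.has_derivative[OF bounded_linear_Re, of "\<lambda>x. complex_of_real (F x \<bullet> b)" "D b x" "at x"] D[OF b] x
      by simp
    have "((\<lambda>x. \<Sum>b\<in>Basis. (F x \<bullet> b) *\<^sub>R b) has_derivative DF x) (at x)"
      unfolding DF_def by (intro has_derivative_sum has_derivative_scaleR_left 1)
    then show ?thesis by (simp add: euclidean_representation)
  qed
  moreover have "elem_smooth_vec U (\<lambda>x. DF x h)" for h
    unfolding elem_smooth_vec_def
  proof
    fix b :: 'b assume b: "b \<in> Basis"
    have "DF x h \<bullet> b = Re (D b x h)" for x
      using b by (simp add: DF_def inner_sum_left inner_Basis if_distrib cong: if_cong)
    then show "elem_smooth U (\<lambda>x. complex_of_real (DF x h \<bullet> b))"
      using elem_smooth.Re[OF conjunct2[OF D[OF b], rule_format, of h]] by simp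
  qed
  ultimately show ?thesis by blast
qed

lemma has_vector_derivative_along_line:
  fixes G H :: "'a::real_normed_vector \<Rightarrow> 'b::real_normed_vector"
  assumes U: "open U" "x \<in> U" and G: "(G has_derivative DG) (at x)" and HG: "\<forall>y\<in>U. H y = G y"
  shows "((\<lambda>t. H (x + t *\<^sub>R v)) has_vector_derivative DG v) (at 0)"
proof -
  have l: "linear DG" using G by (rule has_derivative_linear)
  have 1: "((\<lambda>t. x + t *\<^sub>R v) has_derivative (\<lambda>t. t *\<^sub>R v)) (at 0)"
    by (auto intro!: derivative_eq_intros)
  have "((\<lambda>t. G (x + t *\<^sub>R v)) has_derivative (\<lambda>t. DG (t *\<^sub>R v))) (at 0)"
    using has_derivative_compose[OF 1, of G DG] G by simp
  then have 2: "((\<lambda>t. G (x + t *\<^sub>R v)) has_vector_derivative DG v) (at 0)"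
    unfolding has_vector_derivative_def using linear.scaleR[OF l] by simp
  have op: "open ((\<lambda>t. x + t *\<^sub>R v) -` U)"
    by (rule continuous_open_vimage[OF U(1)]) (auto intro!: continuous_intros)
  show ?thesis
    by (rule has_vector_derivative_transform_within_open[OF 2 op]) (use U HG in auto)
qed

lemma elem_smooth_vec_iter_dd:
  assumes U: "open U"
  shows "elem_smooth_vec U F \<Longrightarrow> \<exists>G. elem_smooth_vec U G \<and> (\<forall>x\<in>U. iter_dd vs F x = G x)"
proof (induction vs arbitrary: F)
  case Nil then show ?case by auto
next
  case (Cons v vs)
  then obtain G where G: "elem_smooth_vec U G" "\<forall>x\<in>U. iter_dd vs F x = G x" by blast
  obtain DG where DG: "\<forall>x\<in>U. (G has_derivative DG x) (at x)" "\<forall>h. elem_smooth_vec U (\<lambda>x. DG x h)"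
    using elem_smooth_vec_has_derivative[OF G(1)] by blast
  have "iter_dd (v # vs) F x = DG x v" if x: "x \<in> U" for x
  proof -
    have "((\<lambda>t. iter_dd vs F (x + t *\<^sub>R v)) has_vector_derivative DG x v) (at 0)"
      using has_vector_derivative_along_line[OF U x] DG(1) x G(2) by blast
    then show ?thesis by (simp add: dirderiv_def vector_derivative_at)
  qed
  then show ?case using DG(2) by blast
qed

lemma smooth_on_elem_smooth_vec:
  fixes F :: "'a::euclidean_space \<Rightarrow> 'b::euclidean_space"
  assumes U: "open U" and F: "elem_smooth_vec U F"
  shows "smooth_on U F"
  unfolding smooth_on_def
proof (intro conjI allI ballI)
  fix vs :: "'a list"
  obtain G where G: "elem_smooth_vec U G" "\<forall>x\<in>U. iter_dd vs F x = G x" using elem_smooth_vec_iter_dd[OF U F] by blast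
  obtain DG where DG: "\<forall>x\<in>U. (G has_derivative DG x) (at x)" using elem_smooth_vec_has_derivative[OF G(1)] by blast
  have "continuous_on U G"
    using DG by (meson continuous_at_imp_continuous_on has_derivative_continuous)
  then show "continuous_on U (iter_dd vs F)" using G(2) continuous_on_cong by blast
  fix v x assume x: "x \<in> U"
  show "(\<lambda>t. iter_dd vs F (x + t *\<^sub>R v)) differentiable (at 0)"
    using has_vector_derivative_along_line[OF U x, of G "DG x" "iter_dd vs F" v] DG x G(2)
    unfolding has_vector_derivative_def differentiable_def by blast
qed (rule U)

lemma inner_Basis_tensor:
  assumes "b \<in> (Basis :: (real^'l^'p^'n) set)"
  shows "\<exists>i j k. \<forall>x::real^'l^'p^'n. x \<bullet> b = x$i$j$k"
proof -
  from assms obtain i u where b: "b = axis i u" "u \<in> (Basis :: (real^'l^'p) set)"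
    unfolding Basis_vec_def by auto
  from b(2) obtain j u' where u: "u = axis j u'" "u' \<in> (Basis :: (real^'l) set)"
    unfolding Basis_vec_def by auto
  from u(2) obtain k r where u': "u' = axis k r" "r \<in> (Basis :: real set)"
    unfolding Basis_vec_def by auto
  have "x \<bullet> b = x$i$j$k" for x :: "real^'l^'p^'n"
    using u'(2) by (simp add: b u u' inner_axis)
  then show ?thesis by blast
qed

lemma elem_smooth_vec_tensorI:
  fixes F :: "'a::real_normed_vector \<Rightarrow> real^'l^'p^'n"
  assumes "\<And>i j k. elem_smooth U (\<lambda>z. complex_of_real (F z $i$j$k))"
  shows "elem_smooth_vec U F"
  unfolding elem_smooth_vec_def
proof
  fix b :: "real^'l^'p^'n" assume "b \<in> Basis"
  then obtain i j k where "\<forall>x::real^'l^'p^'n. x \<bullet> b = x$i$j$k" using inner_Basis_tensor by blast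
  then show "elem_smooth U (\<lambda>x. complex_of_real (F x \<bullet> b))" using assms by simp
qed

section \<open>Smoothness of the Gram-Schmidt Q-factor\<close>

lemma elem_smooth_cinner:
  assumes "\<And>i. elem_smooth U (\<lambda>z. u z $ i)" "\<And>i. elem_smooth U (\<lambda>z. v z $ i)"
  shows "elem_smooth U (\<lambda>z. cinner (u z) (v z))"
  unfolding cinner_def using assms by (intro elem_smooth_sum elem_smooth.mult elem_smooth.cnj) auto

lemma gs_q_elem_smooth:
  fixes M :: "'a::real_normed_vector \<Rightarrow> complex^('p::enum)^'n"
  assumes M: "\<And>i c. elem_smooth UNIV (\<lambda>z. M z $i$c)"
  shows "open {z. \<forall>j<m. gs_u (M z) j \<noteq> 0} \<and>
    (\<forall>j<m. \<forall>i. elem_smooth {z. \<forall>j<m. gs_u (M z) j \<noteq> 0} (\<lambda>z. gs_q (M z) j $ i))"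
proof (induction m)
  case 0
  show ?case by simp
next
  case (Suc m)
  let ?O = "{z. \<forall>j<m. gs_u (M z) j \<noteq> 0}" and ?O' = "{z. \<forall>j<Suc m. gs_u (M z) j \<noteq> 0}"
  have sub: "?O' \<subseteq> ?O" by auto
  have u_smooth: "elem_smooth ?O (\<lambda>z. gs_u (M z) m $ i)" for i
  proof -
    have "elem_smooth ?O (\<lambda>z. ncol (M z) m $ i -
        (\<Sum>j<m. cinner (gs_q (M z) j) (ncol (M z) m) * gs_q (M z) j $ i))"
      using Suc.IH elem_smooth_subset[OF M] by (intro elem_smooth_diff elem_smooth_sum elem_smooth.mult elem_smooth_cinner)
        (auto simp: ncol_def)
    then show ?thesis by (simp add: gs_u_def sum_component)
  qed
  have "continuous_on ?O (\<lambda>z. \<chi> i. gs_u (M z) m $ i)"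
    by (intro continuous_on_vec_lambda elem_smooth_continuous_on u_smooth)
  then have "open ((\<lambda>z. gs_u (M z) m) -` (- {0}) \<inter> ?O)"
    using Suc.IH continuous_on_open_vimage[of ?O "\<lambda>z. gs_u (M z) m"] by (simp add: open_Compl)
  moreover have "?O' = (\<lambda>z. gs_u (M z) m) -` (- {0}) \<inter> ?O"
    by (auto simp: less_Suc_eq)
  ultimately have "open ?O'" by simp
  moreover have "elem_smooth ?O' (\<lambda>z. gs_q (M z) m $ i)" for i
  proof -
    have pos: "\<forall>z\<in>?O'. 0 < Re (cinner (gs_u (M z) m) (gs_u (M z) m))"
      by (auto simp: cinner_self_Re_pos_iff)
    have "elem_smooth ?O' (\<lambda>z. inverse (complex_of_real (sqrt (Re (cinner (gs_u (M z) m) (gs_u (M z) m)))))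
        * gs_u (M z) m $ i)"
      using pos elem_smooth_subset[OF u_smooth sub]
      by (intro elem_smooth.mult elem_smooth.inverse elem_smooth.sqrt elem_smooth_cinner) auto
    then show ?thesis by (simp add: gs_q_eq gs_r_def divide_inverse)
  qed
  ultimately show ?case using Suc.IH elem_smooth_subset[OF _ sub] by (auto simp: less_Suc_eq)
qed

lemma elem_smooth_hat: "elem_smooth UNIV (\<lambda>A :: real^('l::enum)^'p^'n. hat A \<kappa> $i$c)"
proof -
  have "bounded_linear (\<lambda>A::real^('l::enum)^'p^'n. A$i$c$k)" for k
    by (intro bounded_linear_compose[OF bounded_linear_vec_nth] bounded_linear_vec_nth)
  then show ?thesis
    unfolding fslice_def vec_lambda_beta dft_nth
    by (intro elem_smooth_sum elem_smooth.mult elem_smooth.const elem_smooth.real_linear) auto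
qed

lemma tqr_domain_eq:
  "tqr_domain = (\<Inter>\<kappa>. {A :: real^('l::enum)^('p::enum)^'n. \<forall>j<CARD('p). gs_u (hat A \<kappa>) j \<noteq> 0})"
  by (auto simp: tqr_domain_def gs_regular_def)

lemma open_tqr_domain: "open (tqr_domain :: (real^('l::enum)^('p::enum)^'n) set)"
  unfolding tqr_domain_eq using gs_q_elem_smooth[OF elem_smooth_hat] by (intro open_INT) auto

lemma elem_smooth_gs_Q_hat:
  "elem_smooth (tqr_domain :: (real^('l::enum)^('p::enum)^'n) set) (\<lambda>A. gs_Q (hat A \<kappa>) $i$j)"
proof -
  let ?O = "{A :: real^('l::enum)^('p::enum)^'n. \<forall>j<CARD('p). gs_u (hat A \<kappa>) j \<noteq> 0}"
  have "elem_smooth ?O (\<lambda>A. gs_q (hat A \<kappa>) (ix j) $ i)"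
    using gs_q_elem_smooth[OF elem_smooth_hat, of "CARD('p)"] ix_less_card by blast
  moreover have "tqr_domain \<subseteq> ?O"
    unfolding tqr_domain_eq by blast
  ultimately show ?thesis
    unfolding gs_Q_def vec_lambda_beta by (rule elem_smooth_subset)
qed

lemma elem_smooth_vec_qf_gs:
  "elem_smooth_vec (tqr_domain :: (real^('l::enum)^('p::enum)^'n) set) qf_gs"
proof (rule elem_smooth_vec_tensorI)
  fix i :: 'n and j :: 'p and k :: 'l
  let ?S = "\<lambda>A :: real^('l::enum)^('p::enum)^'n.
    \<Sum>\<kappa>\<in>UNIV. cnj (omega TYPE('l) ^ (ix \<kappa> * ix k)) * gs_Q (hat A \<kappa>) $i$j"
  have "elem_smooth tqr_domain (\<lambda>A. complex_of_real (Re (?S A)) * complex_of_real (1 / real CARD('l)))"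
    by (intro elem_smooth.mult elem_smooth.Re elem_smooth_sum elem_smooth.const elem_smooth_gs_Q_hat) auto
  moreover have "qf_gs A $i$j$k = Re (?S A) / real CARD('l)" for A :: "real^('l::enum)^('p::enum)^'n"
    unfolding qf_gs_def idft_def vec_lambda_beta ..
  ultimately show "elem_smooth tqr_domain (\<lambda>A. complex_of_real (qf_gs A $i$j$k))"
    by simp
qed

section \<open>Tangent vectors and the derivative of the retraction\<close>

lemma vector_derivative_eq_on_open:
  fixes f g :: "real \<Rightarrow> 'b::real_normed_vector"
  assumes "open T" "t0 \<in> T" "\<forall>t\<in>T. f t = g t"
    and "(f has_vector_derivative f') (at t0)" "(g has_vector_derivative g') (at t0)"
  shows "f' = g'"
proof -
  have "(g has_vector_derivative f') (at t0)"
    by (rule has_vector_derivative_transform_within_open[OF assms(4,1,2)]) (use assms(3) in auto)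
  then show ?thesis using assms(5) vector_derivative_unique_at by blast
qed

lemma hat_has_vector_derivative:
  fixes \<gamma> :: "real \<Rightarrow> real^('l::enum)^'p^'n"
  assumes "(\<gamma> has_vector_derivative V) (at t0)"
  shows "((\<lambda>t. hat (\<gamma> t) \<kappa> $i$a) has_vector_derivative hat V \<kappa> $i$a) (at t0)"
proof -
  have bl: "bounded_linear (\<lambda>x::real^('l::enum)^'p^'n. complex_of_real (x$i$a$k))" for k
  proof -
    have "bounded_linear (\<lambda>x::real^('l::enum)^'p^'n. x$i$a$k)"
      by (rule bounded_linear_compose[OF bounded_linear_vec_nth], rule bounded_linear_compose[OF bounded_linear_vec_nth], rule bounded_linear_vec_nth)
    then show ?thesis using bounded_linear_compose[OF bounded_linear_of_real] by blast
  qed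
  have "((\<lambda>t. complex_of_real (\<gamma> t $i$a$k)) has_vector_derivative complex_of_real (V$i$a$k)) (at t0)" for k
    using bounded_linear.has_vector_derivative[OF bl assms] by simp
  then show ?thesis
    by (simp add: fslice_def dft_nth) (intro has_vector_derivative_sum has_vector_derivative_mult_right)
qed

lemma adj_mult_has_vector_derivative:
  fixes g h :: "real \<Rightarrow> complex^'p^'n"
  assumes "\<And>i a. ((\<lambda>t. g t $i$a) has_vector_derivative g' $i$a) (at t0)"
    and "\<And>i b. ((\<lambda>t. h t $i$b) has_vector_derivative h' $i$b) (at t0)"
  shows "((\<lambda>t. adj_mult (g t) (h t) $a$b) has_vector_derivative (adj_mult (g t0) h' $a$b + adj_mult g' (h t0) $a$b)) (at t0)"
proof -
  have "((\<lambda>t. \<Sum>i\<in>UNIV. cnj (g t $i$a) * h t $i$b) has_vector_derivative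
      (\<Sum>i\<in>UNIV. cnj (g t0 $i$a) * h' $i$b + cnj (g' $i$a) * h t0 $i$b)) (at t0)"
    using assms by (intro has_vector_derivative_sum has_vector_derivative_mult has_vector_derivative_cnj) auto
  then show ?thesis by (simp add: adj_mult_def sum.distrib)
qed

lemma matrix_mult_has_vector_derivative:
  fixes g :: "real \<Rightarrow> complex^'p^'n" and h :: "real \<Rightarrow> complex^'q^'p"
  assumes "\<And>i a. ((\<lambda>t. g t $i$a) has_vector_derivative g' $i$a) (at t0)"
    and "\<And>a b. ((\<lambda>t. h t $a$b) has_vector_derivative h' $a$b) (at t0)"
  shows "((\<lambda>t. (g t ** h t) $i$b) has_vector_derivative ((g t0 ** h') $i$b + (g' ** h t0) $i$b)) (at t0)"
proof -
  have "((\<lambda>t. \<Sum>a\<in>UNIV. g t $i$a * h t $a$b) has_vector_derivative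
      (\<Sum>a\<in>UNIV. g t0 $i$a * h' $a$b + g' $i$a * h t0 $a$b)) (at t0)"
    using assms by (intro has_vector_derivative_sum has_vector_derivative_mult) auto
  then show ?thesis by (simp add: matrix_matrix_mult_def sum.distrib)
qed

lemma unitary_path_derivative_skew:
  fixes Q :: "real \<Rightarrow> complex^'p^'n"
  assumes T: "open T" "0 \<in> T"
    and Qd: "\<And>i a. ((\<lambda>t. Q t $i$a) has_vector_derivative Q'$i$a) (at 0)"
    and unit: "\<forall>t\<in>T. adj_mult (Q t) (Q t) = mat 1"
  shows "adj_mult Q' (Q 0) + adj_mult (Q 0) Q' = 0"
proof -
  have "adj_mult Q' (Q 0) $a$b + adj_mult (Q 0) Q' $a$b = 0" for a b
  proof -
    have d: "((\<lambda>t. adj_mult (Q t) (Q t) $a$b) has_vector_derivative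
        (adj_mult (Q 0) Q' $a$b + adj_mult Q' (Q 0) $a$b)) (at 0)"
      by (rule adj_mult_has_vector_derivative[OF Qd Qd])
    have c: "\<forall>t\<in>T. adj_mult (Q t) (Q t) $a$b = mat 1 $a$b" using unit by simp
    show ?thesis using vector_derivative_eq_on_open[OF T c d has_vector_derivative_const] by (simp add: add.commute)
  qed
  then show ?thesis by (simp add: vec_eq_iff)
qed

lemma tangent_stiefel_skew:
  fixes X V :: "real^('l::enum)^'p^'n"
  assumes V: "V \<in> tangent_space stiefel X"
  shows "adj_mult (hat V \<kappa>) (hat X \<kappa>) + adj_mult (hat X \<kappa>) (hat V \<kappa>) = 0"
proof -
  obtain \<gamma> e where e: "e > 0" and \<gamma>: "\<forall>t\<in>{-e<..<e}. \<gamma> t \<in> stiefel" "\<gamma> 0 = X"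
    "(\<gamma> has_vector_derivative V) (at 0)"
    using V unfolding tangent_space_def by blast
  have "\<forall>t\<in>{-e<..<e}. adj_mult (hat (\<gamma> t) \<kappa>) (hat (\<gamma> t) \<kappa>) = mat 1"
    using \<gamma>(1) by (simp add: stiefel_iff_hat)
  with e have "adj_mult (hat V \<kappa>) (hat (\<gamma> 0) \<kappa>) + adj_mult (hat (\<gamma> 0) \<kappa>) (hat V \<kappa>) = 0"
    by (intro unitary_path_derivative_skew[of "{-e<..<e}"] hat_has_vector_derivative[OF \<gamma>(3)]) auto
  then show ?thesis using \<gamma>(2) by simp
qed

lemma cinner_mult_vec: "cinner (A *v z) (B *v z) = cinner z (adj_mult A B *v z)"
proof -
  have "cinner (A *v z) (B *v z) = (\<Sum>i\<in>UNIV. \<Sum>a\<in>UNIV. \<Sum>b\<in>UNIV. cnj (z$a) * (cnj (A$i$a) * B$i$b * z$b))"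
    by (simp add: cinner_def matrix_vector_mult_def sum_distrib_left sum_distrib_right mult_ac)
  also have "\<dots> = (\<Sum>a\<in>UNIV. \<Sum>b\<in>UNIV. \<Sum>i\<in>UNIV. cnj (z$a) * (cnj (A$i$a) * B$i$b * z$b))"
    by (subst sum.swap) (rule sum.cong[OF refl], rule sum.swap)
  also have "\<dots> = cinner z (adj_mult A B *v z)"
    by (simp add: cinner_def matrix_vector_mult_def adj_mult_def sum_distrib_left sum_distrib_right mult_ac)
  finally show ?thesis .
qed

lemma inj_add_skew:
  fixes X V :: "complex^('p::finite)^'n"
  assumes XX: "adj_mult X X = mat 1" and sk: "adj_mult V X + adj_mult X V = 0"
  shows "inj ((*v) (X + V))"
proof -
  have "z = 0" if z: "(X + V) *v z = 0" for z
  proof -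
    let ?x = "X *v z" and ?v = "V *v z"
    have xv: "?x = - ?v" using z by (simp add: matrix_vector_mult_add_rdistrib eq_neg_iff_add_eq_0)
    have "cinner ?x ?v + cinner ?v ?x = cinner z ((adj_mult X V + adj_mult V X) *v z)"
      by (simp add: cinner_mult_vec matrix_vector_mult_add_rdistrib cinner_add_right)
    also have "\<dots> = 0" using sk by (simp add: add.commute cinner_def)
    finally have "cinner ?v ?v = 0" using xv by (simp add: cinner_def sum_negf)
    then have "?x = 0" using xv by (simp add: cinner_self_eq_0_iff)
    have "cinner z z = cinner ?x ?x" by (simp add: cinner_mult_vec XX)
    also have "\<dots> = 0" using \<open>?x = 0\<close> by (simp add: cinner_def)
    finally show "z = 0" by (simp add: cinner_self_eq_0_iff)
  qed
  then show ?thesis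
    by (metis (no_types, lifting) injI matrix_vector_mult_diff_distrib right_minus_eq)
qed

lemma rank_eq_card_if_inj:
  fixes M :: "complex^('p::finite)^'n"
  assumes "inj ((*v) M)"
  shows "rank M = CARD('p)"
proof -
  obtain B where "B ** M = mat 1" using matrix_left_invertible_injective assms by blast
  then have "vec.span (rows M) = UNIV" using matrix_left_invertible_span_rows_gen by blast
  then have "vec.dim (rows M) = vec.dim (UNIV :: (complex^'p) set)" by (metis vec.dim_span)
  then show ?thesis using vec_dim_card[where 'a=complex and 'n='p] by (simp add: row_rank_def_gen)
qed

lemma cnj_adj_mult: "cnj (adj_mult A B $c$a) = adj_mult B A $a$c"
  by (simp add: adj_mult_def mult.commute)

lemma skew_hermitian_upper_eq_0:
  fixes R :: "complex^('p::enum)^('p::enum)"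
  assumes low: "\<And>a c. ix c < ix a \<Longrightarrow> R$a$c = 0" and diag: "\<And>a. cnj (R$a$a) = R$a$a"
    and skew: "\<And>a c. R$a$c + cnj (R$c$a) = 0"
  shows "R = 0"
proof -
  have "R$a$c = 0" for a c
  proof (cases "ix c < ix a")
    case False
    show ?thesis
    proof (cases "ix a < ix c")
      case True
      then show ?thesis using low[OF True] skew[of a c] by simp
    next
      case False
      then have "a = c" using \<open>\<not> ix c < ix a\<close> ix_eq_iff by (metis linorder_neqE_nat)
      then show ?thesis using skew[of a a] diag[of a] by simp
    qed
  qed (rule low)
  then show ?thesis by (simp add: vec_eq_iff)
qed

text \<open>Differentiating \<open>Q t ** R t = X + t *\<^sub>R V\<close> with \<open>R 0 = mat 1\<close> gives \<open>X ** R' + Q' = V\<close>;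
  \<open>R'\<close> is upper triangular with real diagonal and, since \<open>X\<^sup>H V\<close> and \<open>X\<^sup>H Q'\<close> are skew-Hermitian,
  skew-Hermitian itself, hence \<open>R' = 0\<close>.\<close>
lemma qr_factor_derivative:
  fixes Q :: "real \<Rightarrow> complex^('p::enum)^'n" and X V Q' :: "complex^('p::enum)^'n"
  assumes T: "open T" "0 \<in> T"
    and Qd: "\<And>i a. ((\<lambda>t. Q t $i$a) has_vector_derivative Q'$i$a) (at 0)"
    and Q0: "Q 0 = X" and sk: "adj_mult V X + adj_mult X V = 0"
    and unit: "\<forall>t\<in>T. adj_mult (Q t) (Q t) = mat 1"
    and up: "\<forall>t\<in>T. upper_pos (adj_mult (Q t) (X + t *\<^sub>R V))"
    and dec: "\<forall>t\<in>T. Q t ** adj_mult (Q t) (X + t *\<^sub>R V) = X + t *\<^sub>R V"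
  shows "Q' = V"
proof -
  have XX: "adj_mult X X = mat 1" using unit T Q0 by auto
  have Md: "((\<lambda>t. (X + t *\<^sub>R V)$i$c) has_vector_derivative V$i$c) (at 0)" for i c
  proof -
    have "((\<lambda>t. X$i$c + t *\<^sub>R V$i$c) has_vector_derivative V$i$c) (at 0)"
      by (auto intro!: derivative_eq_intros)
    then show ?thesis by simp
  qed
  define R' where "R' = adj_mult X V + adj_mult Q' X"
  have Rd: "((\<lambda>t. adj_mult (Q t) (X + t *\<^sub>R V) $a$c) has_vector_derivative R'$a$c) (at 0)" for a c
    using adj_mult_has_vector_derivative[OF Qd Md, of a c] by (simp add: Q0 R'_def)
  have "X ** R' + Q' = V"
  proof -
    have "(X ** R' + Q') $i$c = V $i$c" for i c
    proof -
      have d: "((\<lambda>t. (Q t ** adj_mult (Q t) (X + t *\<^sub>R V)) $i$c) has_vector_derivative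
          ((X ** R') $i$c + (Q' ** mat 1) $i$c)) (at 0)"
        using matrix_mult_has_vector_derivative[OF Qd Rd, of i c] by (simp add: Q0 XX)
      have c: "\<forall>t\<in>T. (Q t ** adj_mult (Q t) (X + t *\<^sub>R V)) $i$c = (X + t *\<^sub>R V)$i$c" using dec by simp
      show ?thesis using vector_derivative_eq_on_open[OF T c d Md] by simp
    qed
    then show ?thesis by (simp add: vec_eq_iff)
  qed
  moreover have "R' = 0"
  proof (rule skew_hermitian_upper_eq_0)
    show "R'$a$c = 0" if "ix c < ix a" for a c
    proof -
      have c: "\<forall>t\<in>T. adj_mult (Q t) (X + t *\<^sub>R V) $a$c = 0" using up that by (simp add: upper_pos_def)
      show ?thesis using vector_derivative_eq_on_open[OF T c Rd has_vector_derivative_const] by simp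
    qed
    show "cnj (R'$a$a) = R'$a$a" for a
    proof -
      have c: "\<forall>t\<in>T. cnj (adj_mult (Q t) (X + t *\<^sub>R V) $a$a) = adj_mult (Q t) (X + t *\<^sub>R V) $a$a"
        using up by (simp add: upper_pos_def complex_eq_iff)
      show ?thesis using vector_derivative_eq_on_open[OF T c has_vector_derivative_cnj[OF Rd] Rd] .
    qed
    have unit': "adj_mult Q' X + adj_mult X Q' = 0"
      using unitary_path_derivative_skew[OF T Qd unit] by (simp add: Q0)
    show "R'$a$c + cnj (R'$c$a) = 0" for a c
    proof -
      have "R'$a$c + cnj (R'$c$a) = (adj_mult X V + adj_mult V X) $a$c + (adj_mult Q' X + adj_mult X Q') $a$c"
        by (simp add: R'_def cnj_adj_mult)
      then show ?thesis using sk unit' by (simp add: add.commute)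
    qed
  qed
  ultimately show ?thesis by simp
qed

lemma inj_hat_add_tangent:
  fixes X V :: "real^('l::enum)^('p::enum)^'n"
  assumes "X \<in> stiefel" "V \<in> tangent_space stiefel X"
  shows "inj ((*v) (hat (X + V) k))"
  unfolding hat_add using assms(1)
  by (intro inj_add_skew tangent_stiefel_skew[OF assms(2)]) (simp add: stiefel_iff_hat)

lemma tangent_add_in_tqr_domain:
  fixes X V :: "real^('l::enum)^('p::enum)^'n"
  assumes "X \<in> stiefel" "V \<in> tangent_space stiefel X"
  shows "X + V \<in> tqr_domain"
  using gs_regular_if_inj[OF inj_hat_add_tangent[OF assms]] by (simp add: tqr_domain_def)

lemma qf_has_vector_derivative:
  fixes X V :: "real^('l::enum)^('p::enum)^'n"
  assumes X: "X \<in> stiefel" and V: "V \<in> tangent_space stiefel X"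
  shows "((\<lambda>t. qf (X + t *\<^sub>R V)) has_vector_derivative V) (at 0)"
proof -
  have X_dom: "X \<in> tqr_domain" using X by (rule stiefel_in_tqr_domain)
  obtain D where D: "(qf_gs has_derivative D) (at X)"
    using elem_smooth_vec_has_derivative[OF elem_smooth_vec_qf_gs] X_dom by blast
  have line: "((\<lambda>t. qf_gs (X + t *\<^sub>R V)) has_vector_derivative D V) (at 0)"
    by (rule has_vector_derivative_along_line[OF open_tqr_domain X_dom D]) simp
  define T where "T = {t. X + t *\<^sub>R V \<in> tqr_domain}"
  have T: "open T" "0 \<in> T"
    unfolding T_def using X_dom continuous_open_vimage[OF open_tqr_domain, of "\<lambda>t. X + t *\<^sub>R V"]
    by (auto intro!: continuous_intros simp: vimage_def)
  have "hat (D V) \<kappa> = hat V \<kappa>" for \<kappa>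
  proof -
    let ?Q = "\<lambda>t. gs_Q (hat (X + t *\<^sub>R V) \<kappa>)"
    have "X + t *\<^sub>R V \<in> tqr_domain \<Longrightarrow> gs_regular (hat X \<kappa> + t *\<^sub>R hat V \<kappa>)" for t
      by (simp add: tqr_domain_def hat_add hat_scaleR)
    then have regular: "\<forall>t\<in>T. gs_regular (hat X \<kappa> + t *\<^sub>R hat V \<kappa>)" by (simp add: T_def)
    have Q': "((\<lambda>t. ?Q t $i$a) has_vector_derivative hat (D V) \<kappa> $i$a) (at 0)" for i a
      using hat_has_vector_derivative[OF line]
    proof (rule has_vector_derivative_transform_within_open[OF _ T])
      show "hat (qf_gs (X + t *\<^sub>R V)) \<kappa> $i$a = ?Q t $i$a" if "t \<in> T" for t
        using that by (simp add: T_def hat_qf_gs)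
    qed
    have "adj_mult (hat X \<kappa>) (hat X \<kappa>) = mat 1" using X by (simp add: stiefel_iff_hat)
    then have Q0: "?Q 0 = hat X \<kappa>" using gs_qr_unique[OF _ upper_pos_mat_1, of "hat X \<kappa>"] by simp
    show ?thesis
    proof (rule qr_factor_derivative[OF T Q' Q0 tangent_stiefel_skew[OF V]])
      show "\<forall>t\<in>T. adj_mult (?Q t) (?Q t) = mat 1"
        using regular by (simp add: hat_add hat_scaleR gs_unitary)
      show "\<forall>t\<in>T. upper_pos (adj_mult (?Q t) (hat X \<kappa> + t *\<^sub>R hat V \<kappa>))"
        using regular by (simp add: hat_add hat_scaleR gs_upper)
      show "\<forall>t\<in>T. ?Q t ** adj_mult (?Q t) (hat X \<kappa> + t *\<^sub>R hat V \<kappa>) = hat X \<kappa> + t *\<^sub>R hat V \<kappa>"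
        using regular by (simp add: hat_add hat_scaleR gs_decomp)
    qed
  qed
  then have "D V = V" using hat_eq_iff by blast
  with line have "((\<lambda>t. qf_gs (X + t *\<^sub>R V)) has_vector_derivative V) (at 0)" by simp
  then show ?thesis
  proof (rule has_vector_derivative_transform_within_open[OF _ T])
    show "qf_gs (X + t *\<^sub>R V) = qf (X + t *\<^sub>R V)" if "t \<in> T" for t
      using that by (simp add: T_def qf_eq_qf_gs)
  qed
qed

lemma qf_add_tangent_in_stiefel:
  fixes X V :: "real^('l::enum)^('p::enum)^'n"
  assumes "X \<in> stiefel" "V \<in> tangent_space stiefel X"
  shows "qf (X + V) \<in> stiefel"
  using tangent_add_in_tqr_domain[OF assms] by (simp add: qf_eq_qf_gs qf_gs_in_stiefel)

lemma smooth_on_set_qf_add: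
  "smooth_on_set (tangent_bundle (stiefel :: (real^('l::enum)^('p::enum)^'n) set)) (\<lambda>(X, V). qf (X + V))"
  unfolding smooth_on_set_def
proof
  fix z assume z: "z \<in> tangent_bundle (stiefel :: (real^('l::enum)^('p::enum)^'n) set)"
  let ?F = "\<lambda>z. qf_gs (fst z + snd z) :: real^('l::enum)^('p::enum)^'n"
  let ?U = "(\<lambda>z. fst z + snd z) -` tqr_domain :: ((real^('l::enum)^('p::enum)^'n) \<times> (real^('l::enum)^('p::enum)^'n)) set"
  have U: "open ?U"
    by (rule continuous_open_vimage[OF open_tqr_domain]) (intro continuous_intros)
  have "smooth_on ?U ?F"
  proof (rule smooth_on_elem_smooth_vec[OF U elem_smooth_vec_compose_linear[OF elem_smooth_vec_qf_gs]])
    show "bounded_linear (\<lambda>z :: (real^('l::enum)^('p::enum)^'n) \<times> (real^('l::enum)^('p::enum)^'n). fst z + snd z)"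
      by (intro bounded_linear_add bounded_linear_fst bounded_linear_snd)
  qed
  moreover have "(\<lambda>(X, V). qf (X + V)) w = ?F w" if "w \<in> ?U" for w
    using that qf_eq_qf_gs by (cases w) simp
  moreover have "z \<in> ?U"
    using z by (cases z) (auto simp: tangent_bundle_def intro: tangent_add_in_tqr_domain)
  ultimately show "\<exists>U F. open U \<and> z \<in> U \<and> smooth_on U F \<and>
      (\<forall>w\<in>U \<inter> tangent_bundle stiefel. F w = (\<lambda>(X, V). qf (X + V)) w)"
    using U by (intro exI[of _ ?U] exI[of _ ?F]) auto
qed

theorem mainTheorem5:
  assumes "CARD('p::enum) \<le> CARD('n::finite)"
  shows "(\<forall>X \<in> (stiefel :: (real^('l::enum)^('p::enum)^('n::finite)) set).
            \<forall>V \<in> tangent_space stiefel X. dft (X + V) \<in> Cstar)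
         \<and> is_retraction (stiefel :: (real^('l::enum)^('p::enum)^('n::finite)) set) (\<lambda>(X, V). qf (X + V))"
proof
  show "\<forall>X \<in> (stiefel :: (real^('l::enum)^('p::enum)^('n::finite)) set).
            \<forall>V \<in> tangent_space stiefel X. dft (X + V) \<in> Cstar"
    unfolding Cstar_def using rank_eq_card_if_inj[OF inj_hat_add_tangent] by blast
  show "is_retraction (stiefel :: (real^('l::enum)^('p::enum)^('n::finite)) set) (\<lambda>(X, V). qf (X + V))"
    unfolding is_retraction_def
    using smooth_on_set_qf_add qf_add_tangent_in_stiefel qf_stiefel qf_has_vector_derivative
    by (auto simp: tangent_bundle_def)
qed

end
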